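(* Let $\Sigma\in\mathbb{R}^{p\times p}$ be symmetric positive definite and $\Gamma\in\mathbb{R}^{p\times q}$ have full column rank, and set $\Theta=\Sigma+\Gamma\Gamma^T$ with eigendecomposition $\Theta=PD^2P^T$, where $P$ is orthogonal and $D$ is diagonal with $D_{11}\ge D_{22}\ge\cdots\ge D_{pp}>0$. Suppose $\sigma_l$ is bounded away from $0$ and $\gamma_l>c\,\sigma_u$ for a constant $c>1$. Then \[ \|P H_q(D^2)P^T-\Sigma\|_\infty\lesssim \rho_1\rho_2+\gamma_u\rho_1^2/\gamma_l^2 . \]
   Context: Notation: $\gamma_l=\lambda_{\min}(\Gamma^T\Gamma)$, $\gamma_u=\lambda_{\max}(\Gamma^T\Gamma)$, $\sigma_l=\lambda_{\min}(\Sigma)$, $\sigma_u=\lambda_{\max}(\Sigma)$. $\Pi_\Gamma=\Gamma(\Gamma^T\Gamma)^{-1}\Gamma^T$, $\rho_1=\|\Pi_\Gamma\Sigma\|$ (operator norm), $\rho_2=\max_j\|\Pi_\Gamma e_j\|_2$ with $e_j$ the $j$th standard basis vector. For a $p\times p$ matrix $E$, $H_q(E)$ is the matrix with $(H_q(E))_{jk}=0$ if $j,k\le q$ and $(H_q(E))_{jk}=E_{jk}$ otherwise. $\|A\|_\infty=\max_{j,k}|A_{jk}|$. The quantities $p,q,\Sigma,\Gamma$ may vary along a sequence of problems; $a\lesssim b$ means $a\le Cb$ for a constant $C$ depending only on the constants in the hypotheses (here $c$ and the lower bound on $\sigma_l$), not on $p,q,\Sigma,\Gamma$. *)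

theory Defs
  imports "Jordan_Normal_Form.Char_Poly" "Jordan_Normal_Form.Gauss_Jordan_Elimination"
begin

text \<open>Matrices are Jordan_Normal_Form matrices over the reals; indices are 0-based.\<close>

definition sym_pos_def_mat :: "real mat \<Rightarrow> nat \<Rightarrow> bool" where
  "sym_pos_def_mat S p \<longleftrightarrow> S \<in> carrier_mat p p \<and> transpose_mat S = S \<and>
     (\<forall>x \<in> carrier_vec p. x \<noteq> 0\<^sub>v p \<longrightarrow> x \<bullet> (S *\<^sub>v x) > 0)"

definition full_col_rank :: "real mat \<Rightarrow> bool" where
  "full_col_rank G \<longleftrightarrow> (\<forall>x \<in> carrier_vec (dim_col G). G *\<^sub>v x = 0\<^sub>v (dim_row G) \<longrightarrow> x = 0\<^sub>v (dim_col G))"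

definition lambda_min :: "real mat \<Rightarrow> real" where
  "lambda_min A = Min {k. eigenvalue A k}"

definition lambda_max :: "real mat \<Rightarrow> real" where
  "lambda_max A = Max {k. eigenvalue A k}"

definition vnorm2 :: "real vec \<Rightarrow> real" where
  "vnorm2 v = sqrt (v \<bullet> v)"

definition op_norm :: "real mat \<Rightarrow> real" where
  "op_norm A = Sup {vnorm2 (A *\<^sub>v x) | x. x \<in> carrier_vec (dim_col A) \<and> vnorm2 x = 1}"

text \<open>Entrywise max norm (0 for an empty matrix).\<close>
definition max_abs :: "real mat \<Rightarrow> real" where
  "max_abs A = Max (insert 0 {\<bar>A $$ (i,j)\<bar> | i j. i < dim_row A \<and> j < dim_col A})"

definition inv_mat :: "real mat \<Rightarrow> real mat" where
  "inv_mat A = the (mat_inverse A)"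

definition proj_mat :: "real mat \<Rightarrow> real mat" where
  "proj_mat G = G * inv_mat (transpose_mat G * G) * transpose_mat G"

definition H_trunc :: "nat \<Rightarrow> real mat \<Rightarrow> real mat" where
  "H_trunc q E = mat (dim_row E) (dim_col E) (\<lambda>(j,k). if j < q \<and> k < q then 0 else E $$ (j,k))"

definition rho1 :: "real mat \<Rightarrow> real mat \<Rightarrow> real" where
  "rho1 S G = op_norm (proj_mat G * S)"

definition rho2 :: "real mat \<Rightarrow> real" where
  "rho2 G = Max (insert 0 ((\<lambda>j. vnorm2 (proj_mat G *\<^sub>v unit_vec (dim_row G) j)) ` {0..<dim_row G}))"

end

(*
  Let U and V consist of the first q and the last p - q columns of P, so that U U^T + V V^T = I,
  and let Pi = Pi_Gamma and Theta = Sigma + Gamma Gamma^T. Comparing Rayleigh quotients on the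
  column space of Gamma and on its orthogonal complement (a dimension count) shows that the
  leading q eigenvalues of Theta are at least gamma_l and the remaining ones at most sigma_u.

  Since P H_q(D^2) P^T = V V^T Theta V V^T, the error splits as
    P H_q(D^2) P^T - Sigma = V V^T Gamma Gamma^T V V^T - U U^T Sigma U U^T
                             - U U^T Sigma V V^T - V V^T Sigma U U^T.
  Write U U^T = Theta W with W = U D_U^-2 U^T, so that |W| <= 1 / gamma_l and W = U U^T W.
  Because (I - Pi) Theta = (I - Pi) Sigma, one finds
    |(I - Pi) U U^T| <= rho1 / gamma_l + (sigma_u / gamma_l) |(I - Pi) U U^T|,
  and solving Theta z = Sigma z + Gamma Gamma^T z for Gamma^T z similarly gives
    |Gamma^T V V^T| <= rho1 / sqrt gamma_l + (sigma_u / gamma_l) |Gamma^T V V^T|.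
  As sigma_u / gamma_l < 1 / c, both norms are O(rho1 / gamma_l) and O(rho1 / sqrt gamma_l).
  Together with |U U^T e_j| <= |Pi e_j| + |(I - Pi) U U^T e_j| <= rho2 + O(rho1 / gamma_l) and
  |Sigma U U^T| = O(rho1), every entry of the error is O(rho1 rho2 + rho1^2 / gamma_l), and
  rho1^2 / gamma_l <= gamma_u rho1^2 / gamma_l^2.
*)

theory Submission
  imports Defs
begin

section \<open>The Euclidean norm\<close>

lemma quadratic_nonneg_imp_discriminant_le:
  fixes a b c :: real
  assumes c: "c \<ge> 0" and nonneg: "\<And>t. 0 \<le> a + 2*b*t + c*t^2"
  shows "b^2 \<le> a*c"
proof (cases "c = 0")
  case True
  have "b = 0"
  proof (rule ccontr)
    assume "b \<noteq> 0"
    have "0 \<le> a + 2*b*(-(\<bar>a\<bar>+1)/b)" using nonneg[of "-(\<bar>a\<bar>+1)/b"] True by simp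
    also have "\<dots> = a - 2*(\<bar>a\<bar>+1)" using \<open>b \<noteq> 0\<close> by (simp add: field_simps)
    finally show False by (cases "a \<ge> 0") auto
  qed
  then show ?thesis using True by simp
next
  case False
  hence cp: "c > 0" using c by simp
  have "0 \<le> a + 2*b*(-b/c) + c*(-b/c)^2" by (rule nonneg)
  also have "\<dots> = a - b^2/c" using cp by (simp add: field_simps power2_eq_square)
  finally show ?thesis using cp by (simp add: field_simps mult.commute)
qed

lemma scalar_prod_self_nonneg: "0 \<le> (x::real vec) \<bullet> x"
  unfolding scalar_prod_def by (auto intro!: sum_nonneg)

lemma scalar_prod_self_eq_0_imp:
  assumes "(x::real vec) \<in> carrier_vec n" "x \<bullet> x = 0"
  shows "x = 0\<^sub>v n"
proof -
  have "\<forall>i\<in>{0..<dim_vec x}. x$i * x$i = 0"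
    using assms(2) unfolding scalar_prod_def by (subst sum_nonneg_eq_0_iff[symmetric]) auto
  thus ?thesis using assms(1) by (intro eq_vecI) auto
qed

lemma scalar_prod_self_pos:
  assumes "(x::real vec) \<in> carrier_vec n" "x \<noteq> 0\<^sub>v n"
  shows "x \<bullet> x > 0"
  using scalar_prod_self_eq_0_imp[OF assms(1)] assms(2) scalar_prod_self_nonneg[of x]
  by fastforce

lemma vnorm2_nonneg: "0 \<le> vnorm2 x"
  unfolding vnorm2_def using scalar_prod_self_nonneg by simp

lemma power2_vnorm2: "(vnorm2 x)^2 = x \<bullet> x"
  unfolding vnorm2_def using scalar_prod_self_nonneg by simp

lemma vnorm2_eq_0_iff:
  assumes "(x::real vec) \<in> carrier_vec n"
  shows "vnorm2 x = 0 \<longleftrightarrow> x = 0\<^sub>v n"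
  using scalar_prod_self_eq_0_imp[OF assms] assms unfolding vnorm2_def by auto

lemma vnorm2_unit_vec: "i < n \<Longrightarrow> vnorm2 (unit_vec n i) = 1"
  unfolding vnorm2_def by simp

lemma vnorm2_smult: "vnorm2 (t \<cdot>\<^sub>v (a::real vec)) = \<bar>t\<bar> * vnorm2 a"
proof -
  have "(t \<cdot>\<^sub>v a) \<bullet> (t \<cdot>\<^sub>v a) = t^2 * (a \<bullet> a)" by (simp add: power2_eq_square)
  thus ?thesis unfolding vnorm2_def by (simp add: real_sqrt_mult)
qed

lemma vnorm2_le_if_power2_le:
  assumes "(x::real vec) \<bullet> x \<le> K^2" "K \<ge> 0"
  shows "vnorm2 x \<le> K"
  using assms power2_vnorm2[of x] vnorm2_nonneg[of x] by (metis power2_le_imp_le)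

lemma vnorm2_le_if_scalar_prod_self_le:
  assumes "(x::real vec) \<bullet> x \<le> K * vnorm2 x" "K \<ge> 0"
  shows "vnorm2 x \<le> K"
proof -
  have "vnorm2 x * vnorm2 x \<le> K * vnorm2 x"
    using assms(1) power2_vnorm2[of x] by (simp add: power2_eq_square)
  thus ?thesis using vnorm2_nonneg[of x] assms(2)
    by (metis mult_right_le_imp_le linorder_not_le mult_zero_right order.strict_iff_order)
qed

lemma Cauchy_Schwarz_scalar_prod:
  assumes "(a::real vec) \<in> carrier_vec n" "b \<in> carrier_vec n"
  shows "(a \<bullet> b)^2 \<le> (a \<bullet> a) * (b \<bullet> b)"
proof (rule quadratic_nonneg_imp_discriminant_le)
  show "0 \<le> b \<bullet> b" by (rule scalar_prod_self_nonneg)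
  fix t :: real
  have "(a + t \<cdot>\<^sub>v b) \<bullet> (a + t \<cdot>\<^sub>v b) = a \<bullet> a + 2 * (a \<bullet> b) * t + (b \<bullet> b) * t^2"
    using assms by (simp add: scalar_prod_add_distrib add_scalar_prod_distrib comm_scalar_prod[of b n a]
        power2_eq_square algebra_simps)
  thus "0 \<le> a \<bullet> a + 2 * (a \<bullet> b) * t + (b \<bullet> b) * t^2" using scalar_prod_self_nonneg by metis
qed

lemma abs_scalar_prod_le_vnorm2:
  assumes "(a::real vec) \<in> carrier_vec n" "b \<in> carrier_vec n"
  shows "\<bar>a \<bullet> b\<bar> \<le> vnorm2 a * vnorm2 b"
proof -
  have "\<bar>a \<bullet> b\<bar>^2 \<le> (vnorm2 a * vnorm2 b)^2"
    using Cauchy_Schwarz_scalar_prod[OF assms] by (simp add: power_mult_distrib power2_vnorm2)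
  thus ?thesis using vnorm2_nonneg by (meson abs_ge_zero mult_nonneg_nonneg power2_le_imp_le)
qed

lemma vnorm2_add_le:
  assumes "(a::real vec) \<in> carrier_vec n" "b \<in> carrier_vec n"
  shows "vnorm2 (a + b) \<le> vnorm2 a + vnorm2 b"
proof (rule vnorm2_le_if_power2_le)
  have "(a + b) \<bullet> (a + b) = a \<bullet> a + 2 * (a \<bullet> b) + b \<bullet> b"
    using assms by (simp add: scalar_prod_add_distrib add_scalar_prod_distrib comm_scalar_prod[of b n a])
  also have "\<dots> \<le> (vnorm2 a + vnorm2 b)^2"
    using abs_scalar_prod_le_vnorm2[OF assms] by (simp add: power2_sum power2_vnorm2[symmetric])
  finally show "(a + b) \<bullet> (a + b) \<le> (vnorm2 a + vnorm2 b)^2" .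
qed (simp add: vnorm2_nonneg add_nonneg_nonneg)

lemma vnorm2_diff_le:
  assumes "(a::real vec) \<in> carrier_vec n" "b \<in> carrier_vec n"
  shows "vnorm2 (a - b) \<le> vnorm2 a + vnorm2 b"
proof -
  have "a - b = a + (-1) \<cdot>\<^sub>v b" using assms by (intro eq_vecI) auto
  thus ?thesis using vnorm2_add_le[OF assms(1), of "(-1) \<cdot>\<^sub>v b"] assms(2) by (simp add: vnorm2_smult)
qed

lemma vnorm2_le_if_entrywise_le:
  assumes a: "(a::real vec) \<in> carrier_vec n" and b: "b \<in> carrier_vec n" and k: "k \<ge> 0"
    and le: "\<And>i. i < n \<Longrightarrow> \<bar>a $ i\<bar> \<le> k * \<bar>b $ i\<bar>"
  shows "vnorm2 a \<le> k * vnorm2 b"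
proof (rule vnorm2_le_if_power2_le)
  have "a \<bullet> a = (\<Sum>i<n. \<bar>a $ i\<bar>^2)"
    using a unfolding scalar_prod_def by (simp add: atLeast0LessThan power2_eq_square)
  also have "\<dots> \<le> (\<Sum>i<n. (k * \<bar>b $ i\<bar>)^2)"
    using le by (intro sum_mono power_mono) auto
  also have "\<dots> = (k * vnorm2 b)^2"
    using b unfolding power_mult_distrib power2_vnorm2 scalar_prod_def
    by (simp add: atLeast0LessThan sum_distrib_left power2_eq_square)
  finally show "a \<bullet> a \<le> (k * vnorm2 b)^2" .
qed (simp add: k vnorm2_nonneg)

section \<open>Matrices as operators on Euclidean space\<close>

lemma scalar_prod_transpose:
  assumes "(A::real mat) \<in> carrier_mat m n" "x \<in> carrier_vec m" "y \<in> carrier_vec n"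
  shows "x \<bullet> (A *\<^sub>v y) = (transpose_mat A *\<^sub>v x) \<bullet> y"
  using transpose_vec_mult_scalar[OF assms(1,3,2)] by simp

lemma sym_mat_scalar_prod_move:
  assumes "(A::real mat) \<in> carrier_mat n n" "transpose_mat A = A" "x \<in> carrier_vec n" "y \<in> carrier_vec n"
  shows "x \<bullet> (A *\<^sub>v y) = (A *\<^sub>v x) \<bullet> y"
  using scalar_prod_transpose[OF assms(1,3,4)] assms(2) by simp

lemma sym_mat_scalar_prod_comm:
  assumes A: "(A::real mat) \<in> carrier_mat n n" and "transpose_mat A = A"
    and x: "x \<in> carrier_vec n" and y: "y \<in> carrier_vec n"
  shows "x \<bullet> (A *\<^sub>v y) = y \<bullet> (A *\<^sub>v x)"
  using sym_mat_scalar_prod_move[OF assms] comm_scalar_prod[of "A *\<^sub>v x" n y] A x y by simp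

lemma gram_scalar_prod:
  assumes G: "(G::real mat) \<in> carrier_mat p q" and y: "y \<in> carrier_vec q"
  shows "y \<bullet> ((transpose_mat G * G) *\<^sub>v y) = (G *\<^sub>v y) \<bullet> (G *\<^sub>v y)"
  using scalar_prod_transpose[of "transpose_mat G" q p y "G *\<^sub>v y"] G y by auto

lemma mat_entry_eq_scalar_prod_unit_vec:
  assumes M: "(M::real mat) \<in> carrier_mat n n" and j: "j < n" and k: "k < n"
  shows "M $$ (j,k) = unit_vec n j \<bullet> (M *\<^sub>v unit_vec n k)"
  using M j k by (simp add: scalar_prod_right_unit)

lemma diagonal_mat_mult_vec:
  assumes D: "(D::real mat) \<in> carrier_mat n n" and d: "diagonal_mat D" and w: "w \<in> carrier_vec n"
  shows "D *\<^sub>v w = vec n (\<lambda>i. D $$ (i,i) * w $ i)"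
proof (rule eq_vecI)
  fix i assume "i < dim_vec (vec n (\<lambda>i. D $$ (i,i) * w $ i))"
  hence i: "i < n" by simp
  have "(D *\<^sub>v w) $ i = (\<Sum>j\<in>{0..<n}. D $$ (i,j) * w $ j)"
    using D w i by (simp add: scalar_prod_def)
  also have "\<dots> = D $$ (i,i) * w $ i"
    by (subst sum.remove[of _ i]) (use d D i in \<open>auto simp: diagonal_mat_def intro!: sum.neutral\<close>)
  finally show "(D *\<^sub>v w) $ i = vec n (\<lambda>i. D $$ (i,i) * w $ i) $ i" using i by simp
qed (use D in auto)

lemma mult_mat_vec_bounded:
  assumes A: "(A::real mat) \<in> carrier_mat m n"
  shows "\<exists>B\<ge>0. \<forall>x\<in>carrier_vec n. vnorm2 (A *\<^sub>v x) \<le> B * vnorm2 x"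
proof -
  define B where "B = sqrt (\<Sum>i<m. row A i \<bullet> row A i)"
  have B0: "B \<ge> 0" unfolding B_def by (auto intro!: sum_nonneg scalar_prod_self_nonneg)
  have "vnorm2 (A *\<^sub>v x) \<le> B * vnorm2 x" if x: "x \<in> carrier_vec n" for x
  proof (rule vnorm2_le_if_power2_le)
    have "(A *\<^sub>v x) \<bullet> (A *\<^sub>v x) = (\<Sum>i<m. (row A i \<bullet> x)^2)"
      using A unfolding scalar_prod_def[of "A *\<^sub>v x"]
      by (auto simp: atLeast0LessThan power2_eq_square intro!: sum.cong)
    also have "\<dots> \<le> (\<Sum>i<m. (row A i \<bullet> row A i) * (x \<bullet> x))"
      using A x by (intro sum_mono Cauchy_Schwarz_scalar_prod[of _ n]) auto
    also have "\<dots> = (B * vnorm2 x)^2" unfolding B_def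
      by (simp add: power_mult_distrib power2_vnorm2 sum_distrib_right sum_nonneg scalar_prod_self_nonneg)
    finally show "(A *\<^sub>v x) \<bullet> (A *\<^sub>v x) \<le> (B * vnorm2 x)^2" .
  qed (simp add: B0 vnorm2_nonneg)
  thus ?thesis using B0 by blast
qed

lemma vnorm2_mult_le_op_norm:
  assumes A: "(A::real mat) \<in> carrier_mat m n" and x: "x \<in> carrier_vec n"
  shows "vnorm2 (A *\<^sub>v x) \<le> op_norm A * vnorm2 x"
proof (cases "x = 0\<^sub>v n")
  case True
  have "A *\<^sub>v 0\<^sub>v n = 0\<^sub>v m" using A by (intro eq_vecI) auto
  thus ?thesis using True by (simp add: vnorm2_def)
next
  case False
  obtain B where B: "\<And>y. y \<in> carrier_vec n \<Longrightarrow> vnorm2 (A *\<^sub>v y) \<le> B * vnorm2 y"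
    using mult_mat_vec_bounded[OF A] by blast
  have bdd: "bdd_above {vnorm2 (A *\<^sub>v y) | y. y \<in> carrier_vec (dim_col A) \<and> vnorm2 y = 1}"
    using A B by (intro bdd_aboveI[where M=B]) (auto, metis mult.right_neutral)
  have pos: "vnorm2 x > 0" using vnorm2_eq_0_iff[OF x] vnorm2_nonneg[of x] False by auto
  define y where "y = (1 / vnorm2 x) \<cdot>\<^sub>v x"
  have y: "y \<in> carrier_vec n" "vnorm2 y = 1" unfolding y_def using x pos by (auto simp: vnorm2_smult)
  have "A *\<^sub>v y = (1 / vnorm2 x) \<cdot>\<^sub>v (A *\<^sub>v x)" unfolding y_def by (rule mult_mat_vec[OF A x])
  hence "vnorm2 (A *\<^sub>v y) = vnorm2 (A *\<^sub>v x) / vnorm2 x" using pos by (simp add: vnorm2_smult)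
  moreover have "vnorm2 (A *\<^sub>v y) \<le> op_norm A" unfolding op_norm_def
    by (rule cSup_upper[OF _ bdd]) (use y A in auto)
  ultimately show ?thesis using pos by (simp add: divide_le_eq mult.commute)
qed

lemma op_norm_nonneg:
  assumes A: "(A::real mat) \<in> carrier_mat m n" and n: "n > 0"
  shows "0 \<le> op_norm A"
  using vnorm2_mult_le_op_norm[OF A, of "unit_vec n 0"] vnorm2_unit_vec[OF n]
    vnorm2_nonneg[of "A *\<^sub>v unit_vec n 0"] n by simp

lemma rho1_nonneg:
  assumes "p > 0" "S \<in> carrier_mat p p" "G \<in> carrier_mat p q"
  shows "rho1 S G \<ge> 0"
proof -
  have "proj_mat G * S \<in> carrier_mat p p" using assms unfolding proj_mat_def carrier_mat_def by simp
  thus ?thesis unfolding rho1_def using op_norm_nonneg assms(1) by blast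
qed

lemma vnorm2_le_by_adjoint:
  fixes H F :: "real vec \<Rightarrow> real vec"
  assumes H: "\<And>x. x \<in> carrier_vec n \<Longrightarrow> H x \<in> carrier_vec m"
    and F: "\<And>w. w \<in> carrier_vec m \<Longrightarrow> F w \<in> carrier_vec n"
    and adj: "\<And>x w. x \<in> carrier_vec n \<Longrightarrow> w \<in> carrier_vec m \<Longrightarrow> H x \<bullet> w = x \<bullet> F w"
    and F_le: "\<And>w. w \<in> carrier_vec m \<Longrightarrow> vnorm2 (F w) \<le> K * vnorm2 w"
    and K: "K \<ge> 0" and x: "x \<in> carrier_vec n"
  shows "vnorm2 (H x) \<le> K * vnorm2 x"
proof (rule vnorm2_le_if_scalar_prod_self_le)
  have "H x \<bullet> H x = x \<bullet> F (H x)" using adj[OF x H[OF x]] .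
  also have "\<dots> \<le> vnorm2 x * vnorm2 (F (H x))"
    using abs_scalar_prod_le_vnorm2[OF x F[OF H[OF x]]] by simp
  also have "\<dots> \<le> vnorm2 x * (K * vnorm2 (H x))"
    by (rule mult_left_mono[OF F_le[OF H[OF x]] vnorm2_nonneg])
  finally show "H x \<bullet> H x \<le> K * vnorm2 x * vnorm2 (H x)" by (simp add: algebra_simps)
qed (use K vnorm2_nonneg in simp)

text \<open>
  Instead of iterating the improvement, it is applied once to the best constant, the supremum
  of \<open>f x / \<parallel>x\<parallel>\<close>, which the first hypothesis makes finite.
\<close>

lemma vnorm2_bound_by_contraction:
  fixes f :: "real vec \<Rightarrow> real"
  assumes B: "\<And>x. x \<in> carrier_vec n \<Longrightarrow> f x \<le> B * vnorm2 x"
    and improve: "\<And>K x. K \<ge> 0 \<Longrightarrow> \<forall>x\<in>carrier_vec n. f x \<le> K * vnorm2 x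
      \<Longrightarrow> x \<in> carrier_vec n \<Longrightarrow> f x \<le> (a + b*K) * vnorm2 x"
    and b: "0 \<le> b" "b < 1" and a: "a \<ge> 0"
    and x: "x \<in> carrier_vec n"
  shows "f x \<le> a / (1 - b) * vnorm2 x"
proof -
  define R where "R = insert 0 {f x / vnorm2 x | x. x \<in> carrier_vec n \<and> x \<noteq> 0\<^sub>v n}"
  have norm_pos: "vnorm2 x > 0" if "x \<in> carrier_vec n" "x \<noteq> 0\<^sub>v n" for x
    using vnorm2_eq_0_iff[OF that(1)] vnorm2_nonneg[of x] that(2) by auto
  have "f x \<le> max B 0 * vnorm2 x" if "x \<in> carrier_vec n" for x
    using B[OF that] by (meson max.cobounded1 mult_right_mono order_trans vnorm2_nonneg)
  hence bdd: "bdd_above R" unfolding R_def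
    using norm_pos by (intro bdd_aboveI[where M="max B 0"]) (auto simp: divide_le_eq)
  define s where "s = Sup R"
  have s0: "s \<ge> 0" unfolding s_def by (rule cSup_upper[OF _ bdd]) (simp add: R_def)
  have fs: "\<forall>x\<in>carrier_vec n. f x \<le> s * vnorm2 x"
  proof
    fix x :: "real vec" assume x: "x \<in> carrier_vec n"
    show "f x \<le> s * vnorm2 x"
    proof (cases "x = 0\<^sub>v n")
      case True
      thus ?thesis using B[OF x] vnorm2_eq_0_iff[OF x] by simp
    next
      case False
      have "f x / vnorm2 x \<le> s" unfolding s_def
        by (rule cSup_upper[OF _ bdd]) (use x False in \<open>auto simp: R_def\<close>)
      thus ?thesis using norm_pos[OF x False] by (simp add: divide_le_eq)
    qed
  qed
  have improved: "\<forall>x\<in>carrier_vec n. f x \<le> (a + b*s) * vnorm2 x" using improve[OF s0 fs] by blast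
  have "s \<le> a + b*s" unfolding s_def
  proof (rule cSup_least)
    show "R \<noteq> {}" unfolding R_def by simp
    fix r assume "r \<in> R"
    then show "r \<le> a + b * Sup R"
      using a b s0 improved norm_pos unfolding R_def s_def by (auto simp: divide_le_eq)
  qed
  hence "s \<le> a / (1 - b)" using b by (simp add: field_simps)
  thus ?thesis using fs x by (meson mult_right_mono order_trans vnorm2_nonneg)
qed

lemma psd_Cauchy_Schwarz:
  assumes A: "(A::real mat) \<in> carrier_mat n n" and sym: "transpose_mat A = A"
    and psd: "\<And>x. x \<in> carrier_vec n \<Longrightarrow> 0 \<le> x \<bullet> (A *\<^sub>v x)"
    and a: "a \<in> carrier_vec n" and b: "b \<in> carrier_vec n"
  shows "(a \<bullet> (A *\<^sub>v b))^2 \<le> (a \<bullet> (A *\<^sub>v a)) * (b \<bullet> (A *\<^sub>v b))"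
proof (rule quadratic_nonneg_imp_discriminant_le)
  show "0 \<le> b \<bullet> (A *\<^sub>v b)" using psd b by auto
  fix t :: real
  have "(a + t \<cdot>\<^sub>v b) \<bullet> (A *\<^sub>v (a + t \<cdot>\<^sub>v b))
      = a \<bullet> (A *\<^sub>v a) + 2 * (a \<bullet> (A *\<^sub>v b)) * t + (b \<bullet> (A *\<^sub>v b)) * t^2"
    using a b A sym_mat_scalar_prod_comm[OF A sym b a]
    by (simp add: mult_add_distrib_mat_vec[OF A] mult_mat_vec[OF A] scalar_prod_add_distrib[of _ n]
        add_scalar_prod_distrib[of _ n] power2_eq_square algebra_simps)
  thus "0 \<le> a \<bullet> (A *\<^sub>v a) + 2 * (a \<bullet> (A *\<^sub>v b)) * t + (b \<bullet> (A *\<^sub>v b)) * t^2"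
    using psd[of "a + t \<cdot>\<^sub>v b"] a b by auto
qed

lemma psd_vnorm2_mult_le:
  assumes A: "(A::real mat) \<in> carrier_mat n n" and sym: "transpose_mat A = A"
    and psd: "\<And>x. x \<in> carrier_vec n \<Longrightarrow> 0 \<le> x \<bullet> (A *\<^sub>v x)"
    and upper: "\<And>x. x \<in> carrier_vec n \<Longrightarrow> x \<bullet> (A *\<^sub>v x) \<le> \<sigma> * (x \<bullet> x)"
    and \<sigma>: "\<sigma> \<ge> 0" and x: "x \<in> carrier_vec n"
  shows "vnorm2 (A *\<^sub>v x) \<le> \<sigma> * vnorm2 x"
proof (rule vnorm2_le_if_power2_le)
  define y where "y = A *\<^sub>v x"
  have y: "y \<in> carrier_vec n" unfolding y_def using A x by auto
  have "(y \<bullet> y)^2 \<le> (y \<bullet> (A *\<^sub>v y)) * (x \<bullet> (A *\<^sub>v x))"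
    using psd_Cauchy_Schwarz[OF A sym psd y x] unfolding y_def by simp
  also have "\<dots> \<le> (\<sigma> * (y \<bullet> y)) * (\<sigma> * (x \<bullet> x))"
    by (rule mult_mono) (auto intro: upper psd x y simp: \<sigma> scalar_prod_self_nonneg)
  finally have "(y \<bullet> y) * (y \<bullet> y) \<le> (y \<bullet> y) * (\<sigma>^2 * (x \<bullet> x))"
    by (simp add: power2_eq_square algebra_simps)
  hence "y \<bullet> y \<le> \<sigma>^2 * (x \<bullet> x)"
    using scalar_prod_self_nonneg[of y] scalar_prod_self_nonneg[of x]
    by (cases "y \<bullet> y = 0") auto
  thus "(A *\<^sub>v x) \<bullet> (A *\<^sub>v x) \<le> (\<sigma> * vnorm2 x)^2"
    unfolding y_def by (simp add: power_mult_distrib power2_vnorm2)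
qed (simp add: \<sigma> vnorm2_nonneg)

lemma exists_kernel_vec_if_wide:
  assumes M: "(M::real mat) \<in> carrier_mat m n" and mn: "m < n"
  shows "\<exists>v\<in>carrier_vec n. v \<noteq> 0\<^sub>v n \<and> M *\<^sub>v v = 0\<^sub>v m"
proof -
  define M' where "M' = mat\<^sub>r n n (\<lambda>i. if i = n - 1 then 0\<^sub>v n else if i < m then row M i else 0\<^sub>v n)"
  have M': "M' \<in> carrier_mat n n" unfolding M'_def by auto
  have "det M' = 0" unfolding M'_def
    by (rule det_row_0) (use mn M in auto)
  then obtain v where v: "v \<in> carrier_vec n" "v \<noteq> 0\<^sub>v n" "M' *\<^sub>v v = 0\<^sub>v n"
    using det_0_iff_vec_prod_zero[OF M'] by blast
  have "M *\<^sub>v v = 0\<^sub>v m"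
  proof (rule eq_vecI)
    fix i assume "i < dim_vec (0\<^sub>v m :: real vec)"
    hence i: "i < m" by simp
    have "(M' *\<^sub>v v) $ i = row M i \<bullet> v" using i mn M unfolding M'_def by (simp add: mat_of_rows_def)
    thus "(M *\<^sub>v v) $ i = 0\<^sub>v m $ i" using v(3) i mn M by simp
  qed (use M in auto)
  thus ?thesis using v by blast
qed

lemma inv_mat:
  assumes A: "(A::real mat) \<in> carrier_mat n n" and det: "det A \<noteq> 0"
  shows "A * inv_mat A = 1\<^sub>m n" "inv_mat A * A = 1\<^sub>m n" "inv_mat A \<in> carrier_mat n n"
proof -
  have "mat_inverse A \<noteq> None"
    using mat_inverse(1)[OF A, where b="()"] det_non_zero_imp_unit[OF A det, where b="()"] by blast
  then obtain B where B: "mat_inverse A = Some B" by auto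
  thus "A * inv_mat A = 1\<^sub>m n" "inv_mat A * A = 1\<^sub>m n" "inv_mat A \<in> carrier_mat n n"
    using mat_inverse(2)[OF A B] unfolding inv_mat_def by auto
qed

lemma max_abs_le:
  assumes "\<And>i j. i < dim_row A \<Longrightarrow> j < dim_col A \<Longrightarrow> \<bar>A $$ (i,j)\<bar> \<le> b" and "b \<ge> 0"
  shows "max_abs A \<le> b"
proof -
  have "finite {\<bar>A $$ (i,j)\<bar> | i j. i < dim_row A \<and> j < dim_col A}"
    using finite_image_set2[of "\<lambda>i. i < dim_row A" "\<lambda>j. j < dim_col A" "\<lambda>i j. \<bar>A $$ (i,j)\<bar>"] by simp
  thus ?thesis unfolding max_abs_def using assms by (subst Max_le_iff) auto
qed

lemma vnorm2_proj_mat_unit_vec_le_rho2: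
  "j < dim_row G \<Longrightarrow> vnorm2 (proj_mat G *\<^sub>v unit_vec (dim_row G) j) \<le> rho2 G"
  unfolding rho2_def by (intro Max_ge) auto

lemma rho2_nonneg: "0 \<le> rho2 G"
  unfolding rho2_def by (intro Max_ge) auto

section \<open>Rayleigh quotients and extreme eigenvalues\<close>

lemma sym_pos_def_mat_psd:
  assumes "sym_pos_def_mat S p" "x \<in> carrier_vec p"
  shows "0 \<le> x \<bullet> (S *\<^sub>v x)"
  using assms unfolding sym_pos_def_mat_def by (cases "x = 0\<^sub>v p") (auto intro: less_imp_le)

lemma psd_coercive_if_invertible:
  assumes M: "(M::real mat) \<in> carrier_mat n n" and sym: "transpose_mat M = M"
    and psd: "\<And>x. x \<in> carrier_vec n \<Longrightarrow> 0 \<le> x \<bullet> (M *\<^sub>v x)"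
    and N: "N \<in> carrier_mat n n" and inverse: "M * N = 1\<^sub>m n"
  shows "\<exists>\<epsilon>>0. \<forall>x\<in>carrier_vec n. \<epsilon> * (x \<bullet> x) \<le> x \<bullet> (M *\<^sub>v x)"
proof -
  obtain L where L0: "L \<ge> 0" and L: "\<And>x. x \<in> carrier_vec n \<Longrightarrow> vnorm2 (N *\<^sub>v x) \<le> L * vnorm2 x"
    using mult_mat_vec_bounded[OF N] by blast
  have "x \<bullet> x \<le> (L + 1) * (x \<bullet> (M *\<^sub>v x))" if x: "x \<in> carrier_vec n" for x
  proof -
    define z where "z = N *\<^sub>v x"
    have z: "z \<in> carrier_vec n" unfolding z_def using N x by auto
    have Mz: "M *\<^sub>v z = x"
      unfolding z_def using assoc_mult_mat_vec[OF M N x] inverse x by simp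
    have "(x \<bullet> x)^2 \<le> (x \<bullet> (M *\<^sub>v x)) * (z \<bullet> x)"
      using psd_Cauchy_Schwarz[OF M sym psd x z] Mz by simp
    also have "\<dots> \<le> (x \<bullet> (M *\<^sub>v x)) * (L * (x \<bullet> x))"
    proof (rule mult_left_mono[OF _ psd[OF x]])
      have "z \<bullet> x \<le> vnorm2 z * vnorm2 x" using abs_scalar_prod_le_vnorm2[OF z x] by simp
      also have "\<dots> \<le> L * vnorm2 x * vnorm2 x"
        using L[OF x] vnorm2_nonneg[of x] unfolding z_def by (simp add: mult_right_mono)
      finally show "z \<bullet> x \<le> L * (x \<bullet> x)" by (simp add: power2_vnorm2[symmetric] power2_eq_square)
    qed
    finally have "(x \<bullet> x) * (x \<bullet> x) \<le> (x \<bullet> x) * (L * (x \<bullet> (M *\<^sub>v x)))"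
      by (simp add: power2_eq_square algebra_simps)
    hence "x \<bullet> x \<le> L * (x \<bullet> (M *\<^sub>v x))"
      using scalar_prod_self_nonneg[of x] psd[OF x] L0 by (cases "x \<bullet> x = 0") auto
    thus ?thesis using psd[OF x] by (simp add: algebra_simps)
  qed
  hence "\<forall>x\<in>carrier_vec n. 1 / (L + 1) * (x \<bullet> x) \<le> x \<bullet> (M *\<^sub>v x)"
    using L0 by (simp add: field_simps)
  thus ?thesis using L0 by (intro exI[of _ "1 / (L + 1)"]) auto
qed

text \<open>
  The supremum \<open>\<mu>\<close> of the Rayleigh quotient is an eigenvalue: otherwise the positive
  semidefinite matrix \<open>\<mu> I - A\<close> would be invertible, hence coercive, and \<open>\<mu>\<close> would not
  be the least upper bound.
\<close>

lemma sym_mat_rayleigh_sup_eigenvalue: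
  assumes A: "(A::real mat) \<in> carrier_mat n n" and sym: "transpose_mat A = A" and n: "n > 0"
  shows "\<exists>\<mu>. eigenvalue A \<mu> \<and> (\<forall>x\<in>carrier_vec n. x \<bullet> (A *\<^sub>v x) \<le> \<mu> * (x \<bullet> x))"
proof -
  define R where "R = {x \<bullet> (A *\<^sub>v x) | x. x \<in> carrier_vec n \<and> x \<bullet> x = 1}"
  obtain B where B: "\<And>x. x \<in> carrier_vec n \<Longrightarrow> vnorm2 (A *\<^sub>v x) \<le> B * vnorm2 x"
    using mult_mat_vec_bounded[OF A] by blast
  have R_nonempty: "R \<noteq> {}" unfolding R_def using n by (auto intro!: exI[of _ "unit_vec n 0"])
  have "r \<le> B" if "r \<in> R" for r
  proof -
    obtain x where x: "x \<in> carrier_vec n" "x \<bullet> x = 1" and r: "r = x \<bullet> (A *\<^sub>v x)"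
      using \<open>r \<in> R\<close> unfolding R_def by auto
    have "r \<le> vnorm2 x * vnorm2 (A *\<^sub>v x)"
      using abs_scalar_prod_le_vnorm2[OF x(1) mult_mat_vec_carrier[OF A x(1)]] r by auto
    also have "\<dots> \<le> B" using B[OF x(1)] x(2) by (simp add: vnorm2_def)
    finally show "r \<le> B" .
  qed
  hence bdd: "bdd_above R" by (intro bdd_aboveI) auto
  define \<mu> where "\<mu> = Sup R"
  have rayleigh: "x \<bullet> (A *\<^sub>v x) \<le> \<mu> * (x \<bullet> x)" if x: "x \<in> carrier_vec n" for x
  proof (cases "x = 0\<^sub>v n")
    case True
    thus ?thesis using A by simp
  next
    case False
    have pos: "x \<bullet> x > 0" using scalar_prod_self_pos[OF x False] .
    define y where "y = (1 / sqrt (x \<bullet> x)) \<cdot>\<^sub>v x"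
    have y: "y \<in> carrier_vec n" "y \<bullet> y = 1" unfolding y_def using x pos by (auto simp: power_divide)
    have "y \<bullet> (A *\<^sub>v y) = (x \<bullet> (A *\<^sub>v x)) / (x \<bullet> x)"
      unfolding y_def using x A pos by (simp add: mult_mat_vec[OF A] power2_eq_square)
    moreover have "y \<bullet> (A *\<^sub>v y) \<le> \<mu>" unfolding \<mu>_def
      by (rule cSup_upper[OF _ bdd]) (use y in \<open>auto simp: R_def\<close>)
    ultimately show ?thesis using pos by (simp add: divide_le_eq mult.commute)
  qed
  define M where "M = \<mu> \<cdot>\<^sub>m 1\<^sub>m n - A"
  have M: "M \<in> carrier_mat n n" unfolding M_def using A by auto
  have Mx: "M *\<^sub>v x = \<mu> \<cdot>\<^sub>v x - A *\<^sub>v x" if "x \<in> carrier_vec n" for x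
    unfolding M_def using A that by (subst minus_mult_distrib_mat_vec[of _ n n]) auto
  have M_sym: "transpose_mat M = M" unfolding M_def using A sym
    by (intro eq_matI) (auto, metis carrier_matD index_transpose_mat(1))
  have xMx: "x \<bullet> (M *\<^sub>v x) = \<mu> * (x \<bullet> x) - x \<bullet> (A *\<^sub>v x)" if x: "x \<in> carrier_vec n" for x
    using x A by (simp add: Mx[OF x] scalar_prod_minus_distrib[of x n])
  have M_psd: "0 \<le> x \<bullet> (M *\<^sub>v x)" if x: "x \<in> carrier_vec n" for x
    using xMx[OF x] rayleigh[OF x] by simp
  have "det M = 0"
  proof (rule ccontr)
    assume "det M \<noteq> 0"
    then obtain \<epsilon> where \<epsilon>: "\<epsilon> > 0" "\<And>x. x \<in> carrier_vec n \<Longrightarrow> \<epsilon> * (x \<bullet> x) \<le> x \<bullet> (M *\<^sub>v x)"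
      using psd_coercive_if_invertible[OF M M_sym M_psd inv_mat(3,1)[OF M]] by blast
    have "\<mu> \<le> \<mu> - \<epsilon>" unfolding \<mu>_def
    proof (rule cSup_least[OF R_nonempty])
      fix r assume "r \<in> R"
      then obtain x where x: "x \<in> carrier_vec n" "x \<bullet> x = 1" and r: "r = x \<bullet> (A *\<^sub>v x)"
        unfolding R_def by auto
      show "r \<le> Sup R - \<epsilon>" using \<epsilon>(2)[OF x(1)] xMx[OF x(1)] x(2) r unfolding \<mu>_def by simp
    qed
    thus False using \<epsilon>(1) by simp
  qed
  then obtain v where v: "v \<in> carrier_vec n" "v \<noteq> 0\<^sub>v n" "M *\<^sub>v v = 0\<^sub>v n"
    using det_0_iff_vec_prod_zero[OF M] by blast
  have "A *\<^sub>v v = \<mu> \<cdot>\<^sub>v v"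
  proof -
    have "\<mu> \<cdot>\<^sub>v v - A *\<^sub>v v = 0\<^sub>v n" using v Mx by simp
    thus ?thesis using v A by (intro eq_vecI) (auto simp: vec_eq_iff)
  qed
  hence "eigenvalue A \<mu>" unfolding eigenvalue_def eigenvector_def using v A by auto
  thus ?thesis using rayleigh by blast
qed

lemma finite_eigenvalues:
  assumes "(A::real mat) \<in> carrier_mat n n"
  shows "finite {k. eigenvalue A k}"
proof -
  have "char_poly A \<noteq> 0" using degree_monic_char_poly[OF assms] by auto
  hence "finite {k. poly (char_poly A) k = 0}" by (rule poly_roots_finite)
  thus ?thesis using eigenvalue_root_char_poly[OF assms] by simp
qed

lemma rayleigh_le_lambda_max:
  assumes A: "(A::real mat) \<in> carrier_mat n n" and sym: "transpose_mat A = A" and n: "n > 0"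
    and x: "x \<in> carrier_vec n"
  shows "x \<bullet> (A *\<^sub>v x) \<le> lambda_max A * (x \<bullet> x)"
proof -
  obtain \<mu> where \<mu>: "eigenvalue A \<mu>" "\<forall>x\<in>carrier_vec n. x \<bullet> (A *\<^sub>v x) \<le> \<mu> * (x \<bullet> x)"
    using sym_mat_rayleigh_sup_eigenvalue[OF A sym n] by blast
  have "\<mu> \<le> lambda_max A"
    unfolding lambda_max_def using \<mu>(1) finite_eigenvalues[OF A] by (auto intro: Max_ge)
  thus ?thesis using \<mu>(2) x scalar_prod_self_nonneg[of x] by (meson mult_right_mono order_trans)
qed

lemma eigenvalue_uminus:
  assumes A: "(A::real mat) \<in> carrier_mat n n"
  shows "eigenvalue (- A) k \<longleftrightarrow> eigenvalue A (-k)"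
proof -
  have "(- A) *\<^sub>v v = - (A *\<^sub>v v)" if "v \<in> carrier_vec n" for v
    using A that by (intro uminus_mult_mat_vec) auto
  hence "((- A) *\<^sub>v v = k \<cdot>\<^sub>v v) \<longleftrightarrow> (A *\<^sub>v v = (-k) \<cdot>\<^sub>v v)" if "v \<in> carrier_vec n" for v
    using A that by (auto simp: vec_eq_iff)
  moreover have "dim_row (- A) = n" "dim_row A = n" using A by auto
  ultimately show ?thesis unfolding eigenvalue_def eigenvector_def by metis
qed

lemma lambda_min_le_rayleigh:
  assumes A: "(A::real mat) \<in> carrier_mat n n" and sym: "transpose_mat A = A" and n: "n > 0"
    and x: "x \<in> carrier_vec n"
  shows "lambda_min A * (x \<bullet> x) \<le> x \<bullet> (A *\<^sub>v x)"
proof -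
  have "transpose_mat (- A) = - A" using A sym by (intro eq_matI) (auto, metis carrier_matD index_transpose_mat(1))
  then obtain \<mu> where \<mu>: "eigenvalue (- A) \<mu>" "\<forall>x\<in>carrier_vec n. x \<bullet> ((- A) *\<^sub>v x) \<le> \<mu> * (x \<bullet> x)"
    using sym_mat_rayleigh_sup_eigenvalue[of "- A" n] A n by auto
  have "lambda_min A \<le> -\<mu>" unfolding lambda_min_def
    using \<mu>(1) eigenvalue_uminus[OF A] finite_eigenvalues[OF A] by (auto intro: Min_le)
  hence "lambda_min A * (x \<bullet> x) \<le> (-\<mu>) * (x \<bullet> x)"
    using scalar_prod_self_nonneg[of x] by (rule mult_right_mono)
  moreover have "x \<bullet> ((- A) *\<^sub>v x) = - (x \<bullet> (A *\<^sub>v x))"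
    using A x by (simp add: uminus_mult_mat_vec scalar_prod_uminus_right)
  ultimately show ?thesis using \<mu>(2) x by force
qed

lemma lambda_min_le_lambda_max:
  assumes A: "(A::real mat) \<in> carrier_mat n n" and sym: "transpose_mat A = A" and n: "n > 0"
  shows "lambda_min A \<le> lambda_max A"
  using lambda_min_le_rayleigh[OF assms, of "unit_vec n 0"] rayleigh_le_lambda_max[OF assms, of "unit_vec n 0"] n
  by simp

lemma lambda_max_nonneg_if_psd:
  assumes A: "(A::real mat) \<in> carrier_mat n n" and sym: "transpose_mat A = A" and n: "n > 0"
    and psd: "\<And>x. x \<in> carrier_vec n \<Longrightarrow> 0 \<le> x \<bullet> (A *\<^sub>v x)"
  shows "0 \<le> lambda_max A"
  using psd[of "unit_vec n 0"] rayleigh_le_lambda_max[OF assms(1-3), of "unit_vec n 0"] n by simp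

text \<open>
  An empty matrix has no eigenvalues, so \<^const>\<open>lambda_min\<close> and \<^const>\<open>lambda_max\<close> both
  return the unspecified value \<open>Min {} = Max {}\<close>.
\<close>

lemma lambda_min_max_empty:
  assumes "(A::real mat) \<in> carrier_mat 0 0" "(B::real mat) \<in> carrier_mat 0 0"
  shows "lambda_min A = lambda_max B"
proof -
  have no_eigenvalues: "{k. eigenvalue M k} = {}" if "(M::real mat) \<in> carrier_mat 0 0" for M
  proof -
    have "v = 0\<^sub>v 0" if "v \<in> carrier_vec 0" for v :: "real vec" using that by (intro eq_vecI) auto
    thus ?thesis using that unfolding eigenvalue_def eigenvector_def by auto
  qed
  show ?thesis unfolding lambda_min_def lambda_max_def no_eigenvalues[OF assms(1)] no_eigenvalues[OF assms(2)]
    by (simp add: Min.eq_fold' Max.eq_fold')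
qed

section \<open>Eigenvalues of \<open>\<Sigma> + \<Gamma> \<Gamma>\<^sup>T\<close>\<close>

text \<open>
  \<open>\<sigma>\<close> and \<open>g\<close> are any upper Rayleigh bound of \<open>\<Sigma>\<close> and lower Rayleigh bound of
  \<open>\<Gamma>\<^sup>T \<Gamma>\<close>, in the theorem \<open>\<sigma>\<^sub>u\<close> and \<open>\<gamma>\<^sub>l\<close>.
\<close>

locale spiked_covariance =
  fixes p q :: nat and S G P D :: "real mat" and \<sigma> g :: real
  assumes q_pos: "q > 0"
    and S_carrier: "S \<in> carrier_mat p p" and S_sym: "transpose_mat S = S"
    and S_psd: "\<And>x. x \<in> carrier_vec p \<Longrightarrow> 0 \<le> x \<bullet> (S *\<^sub>v x)"
    and S_upper: "\<And>x. x \<in> carrier_vec p \<Longrightarrow> x \<bullet> (S *\<^sub>v x) \<le> \<sigma> * (x \<bullet> x)"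
    and \<sigma>_nonneg: "\<sigma> \<ge> 0"
    and G_carrier: "G \<in> carrier_mat p q"
    and gram_lower: "\<And>y. y \<in> carrier_vec q \<Longrightarrow> g * (y \<bullet> y) \<le> y \<bullet> ((transpose_mat G * G) *\<^sub>v y)"
    and gap: "\<sigma> < g"
    and P_carrier: "P \<in> carrier_mat p p" and P_orthogonal: "transpose_mat P * P = 1\<^sub>m p"
    and D_carrier: "D \<in> carrier_mat p p" and D_diagonal: "diagonal_mat D"
    and D_antimono: "\<And>i j. i \<le> j \<Longrightarrow> j < p \<Longrightarrow> D $$ (j,j) \<le> D $$ (i,i)"
    and D_pos: "\<And>i. i < p \<Longrightarrow> D $$ (i,i) > 0"
    and decomposition: "S + G * transpose_mat G = P * (D * D) * transpose_mat P"
begin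

abbreviation "Pt \<equiv> transpose_mat P"
abbreviation "Gt \<equiv> transpose_mat G"
abbreviation "Gram \<equiv> Gt * G"

lemma Pt_carrier: "Pt \<in> carrier_mat p p" using P_carrier by simp
lemma Gt_carrier: "Gt \<in> carrier_mat q p" using G_carrier by simp
lemma Gram_carrier: "Gram \<in> carrier_mat q q" using G_carrier by simp

lemma g_pos: "g > 0" using gap \<sigma>_nonneg by simp

lemma G_injective:
  assumes y: "y \<in> carrier_vec q" and Gy: "G *\<^sub>v y = 0\<^sub>v p"
  shows "y = 0\<^sub>v q"
proof -
  have "g * (y \<bullet> y) \<le> 0" using gram_lower[OF y] gram_scalar_prod[OF G_carrier y] Gy by simp
  hence "y \<bullet> y = 0" using g_pos scalar_prod_self_nonneg[of y] by (simp add: mult_le_0_iff)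
  thus ?thesis using scalar_prod_self_eq_0_imp[OF y] by simp
qed

lemma q_le_p: "q \<le> p"
proof (rule ccontr)
  assume "\<not> q \<le> p"
  then obtain y where "y \<in> carrier_vec q" "y \<noteq> 0\<^sub>v q" "G *\<^sub>v y = 0\<^sub>v p"
    using exists_kernel_vec_if_wide[OF G_carrier] by auto
  thus False using G_injective by blast
qed

lemma P_Pt: "P * Pt = 1\<^sub>m p"
  by (rule mat_mult_left_right_inverse[OF Pt_carrier P_carrier P_orthogonal])

lemma Pt_P_mult_vec: "w \<in> carrier_vec p \<Longrightarrow> Pt *\<^sub>v (P *\<^sub>v w) = w"
  using P_orthogonal P_carrier Pt_carrier by (metis assoc_mult_mat_vec one_mult_mat_vec)

lemma P_Pt_mult_vec: "x \<in> carrier_vec p \<Longrightarrow> P *\<^sub>v (Pt *\<^sub>v x) = x"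
  using P_Pt P_carrier Pt_carrier by (metis assoc_mult_mat_vec one_mult_mat_vec)

lemma P_adjoint: "w \<in> carrier_vec p \<Longrightarrow> x \<in> carrier_vec p \<Longrightarrow> (P *\<^sub>v w) \<bullet> x = w \<bullet> (Pt *\<^sub>v x)"
  using transpose_vec_mult_scalar[OF Pt_carrier, of x w] by simp

lemma scalar_prod_P_mult:
  "w \<in> carrier_vec p \<Longrightarrow> w' \<in> carrier_vec p \<Longrightarrow> (P *\<^sub>v w) \<bullet> (P *\<^sub>v w') = w \<bullet> w'"
  using P_adjoint[of w "P *\<^sub>v w'"] Pt_P_mult_vec[of w'] P_carrier by simp

lemma vnorm2_P_mult: "w \<in> carrier_vec p \<Longrightarrow> vnorm2 (P *\<^sub>v w) = vnorm2 w"
  unfolding vnorm2_def using scalar_prod_P_mult by simp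

lemma vnorm2_Pt_mult: "x \<in> carrier_vec p \<Longrightarrow> vnorm2 (Pt *\<^sub>v x) = vnorm2 x"
  using vnorm2_P_mult[of "Pt *\<^sub>v x"] P_Pt_mult_vec[of x] Pt_carrier by simp

definition Theta :: "real mat" where "Theta = S + G * Gt"

lemma Theta_carrier: "Theta \<in> carrier_mat p p"
  unfolding Theta_def using S_carrier G_carrier by auto

definition dsq :: "nat \<Rightarrow> real" where "dsq i = D $$ (i,i) * D $$ (i,i)"

definition scale_dsq :: "real vec \<Rightarrow> real vec" where "scale_dsq w = vec p (\<lambda>i. dsq i * w $ i)"

lemma scale_dsq_carrier[simp]: "scale_dsq w \<in> carrier_vec p"
  unfolding scale_dsq_def by simp

lemma dsq_pos: "i < p \<Longrightarrow> dsq i > 0"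
  unfolding dsq_def using D_pos by simp

lemma dsq_antimono: assumes "i \<le> j" "j < p" shows "dsq j \<le> dsq i"
proof -
  have "D $$ (j,j) \<le> D $$ (i,i)" "D $$ (j,j) > 0" using D_antimono D_pos assms by auto
  thus ?thesis unfolding dsq_def by (simp add: mult_mono)
qed

lemma DD_mult_vec: "w \<in> carrier_vec p \<Longrightarrow> (D * D) *\<^sub>v w = scale_dsq w"
  using D_carrier diagonal_mat_mult_vec[OF D_carrier D_diagonal]
  by (auto simp: scale_dsq_def dsq_def algebra_simps)

lemma Theta_mult_vec: "x \<in> carrier_vec p \<Longrightarrow> Theta *\<^sub>v x = S *\<^sub>v x + G *\<^sub>v (Gt *\<^sub>v x)"
  unfolding Theta_def using S_carrier G_carrier by (simp add: add_mult_distrib_mat_vec[of _ p p])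

lemma scalar_prod_Theta:
  "x \<in> carrier_vec p \<Longrightarrow> y \<in> carrier_vec p \<Longrightarrow> x \<bullet> (Theta *\<^sub>v y) = x \<bullet> (S *\<^sub>v y) + (Gt *\<^sub>v x) \<bullet> (Gt *\<^sub>v y)"
  using Theta_mult_vec[of y] scalar_prod_transpose[OF G_carrier, of x "Gt *\<^sub>v y"] S_carrier G_carrier
  by (simp add: scalar_prod_add_distrib[of _ p])

lemma Theta_mult_P:
  assumes w: "w \<in> carrier_vec p"
  shows "Theta *\<^sub>v (P *\<^sub>v w) = P *\<^sub>v scale_dsq w"
proof -
  have "Theta *\<^sub>v (P *\<^sub>v w) = (P * (D * D) * Pt) *\<^sub>v (P *\<^sub>v w)"
    unfolding Theta_def decomposition ..
  also have "\<dots> = P *\<^sub>v ((D * D) *\<^sub>v (Pt *\<^sub>v (P *\<^sub>v w)))"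
    using P_carrier D_carrier Pt_carrier w by (simp add: assoc_mult_mat_vec[of _ p p _ p])
  finally show ?thesis using Pt_P_mult_vec[OF w] DD_mult_vec[OF w] by simp
qed

lemma scalar_prod_P_Theta_P:
  assumes a: "a \<in> carrier_vec p" and b: "b \<in> carrier_vec p"
  shows "(P *\<^sub>v a) \<bullet> (Theta *\<^sub>v (P *\<^sub>v b)) = (\<Sum>i<p. dsq i * a $ i * b $ i)"
proof -
  have "(P *\<^sub>v a) \<bullet> (Theta *\<^sub>v (P *\<^sub>v b)) = a \<bullet> scale_dsq b"
    using Theta_mult_P[OF b] scalar_prod_P_mult[OF a] by simp
  also have "\<dots> = (\<Sum>i<p. dsq i * a $ i * b $ i)"
    using a unfolding scale_dsq_def scalar_prod_def by (auto simp: atLeast0LessThan intro!: sum.cong)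
  finally show ?thesis .
qed

text \<open>
  The two halves of the Courant--Fischer characterisation of \<open>dsq m\<close>, the
  \<open>m\<close>-th largest eigenvalue of \<open>\<Theta>\<close>.
\<close>

lemma rayleigh_Theta_le_if_head_zero:
  assumes h: "h \<in> carrier_vec p" and m: "m < p" and head: "\<And>k. k < m \<Longrightarrow> h $ k = 0"
  shows "(P *\<^sub>v h) \<bullet> (Theta *\<^sub>v (P *\<^sub>v h)) \<le> dsq m * (h \<bullet> h)"
proof -
  have "(P *\<^sub>v h) \<bullet> (Theta *\<^sub>v (P *\<^sub>v h)) = (\<Sum>k<p. dsq k * h $ k * h $ k)"
    by (rule scalar_prod_P_Theta_P[OF h h])
  also have "\<dots> \<le> (\<Sum>k<p. dsq m * (h $ k * h $ k))"
  proof (rule sum_mono)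
    fix k assume k: "k \<in> {..<p}"
    show "dsq k * h $ k * h $ k \<le> dsq m * (h $ k * h $ k)"
    proof (cases "k < m")
      case True thus ?thesis using head by simp
    next
      case False
      thus ?thesis using dsq_antimono[of m k] k by (simp add: mult.assoc mult_right_mono[OF _ zero_le_square])
    qed
  qed
  also have "\<dots> = dsq m * (h \<bullet> h)"
    using h unfolding scalar_prod_def by (simp add: atLeast0LessThan sum_distrib_left)
  finally show ?thesis .
qed

lemma rayleigh_Theta_ge_if_tail_zero:
  assumes h: "h \<in> carrier_vec p" and m: "m < p" and tail: "\<And>k. m < k \<Longrightarrow> k < p \<Longrightarrow> h $ k = 0"
  shows "dsq m * (h \<bullet> h) \<le> (P *\<^sub>v h) \<bullet> (Theta *\<^sub>v (P *\<^sub>v h))"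
proof -
  have "dsq m * (h \<bullet> h) = (\<Sum>k<p. dsq m * (h $ k * h $ k))"
    using h unfolding scalar_prod_def by (simp add: atLeast0LessThan sum_distrib_left)
  also have "\<dots> \<le> (\<Sum>k<p. dsq k * h $ k * h $ k)"
  proof (rule sum_mono)
    fix k assume k: "k \<in> {..<p}"
    show "dsq m * (h $ k * h $ k) \<le> dsq k * h $ k * h $ k"
    proof (cases "m < k")
      case True thus ?thesis using tail k by simp
    next
      case False
      thus ?thesis using dsq_antimono[of k m] m by (simp add: mult.assoc mult_right_mono[OF _ zero_le_square])
    qed
  qed
  also have "\<dots> = (P *\<^sub>v h) \<bullet> (Theta *\<^sub>v (P *\<^sub>v h))"
    by (rule scalar_prod_P_Theta_P[OF h h, symmetric])
  finally show ?thesis .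
qed

lemma gram_mult_vec_lower:
  assumes y: "y \<in> carrier_vec q"
  shows "g * (y \<bullet> (Gram *\<^sub>v y)) \<le> (Gram *\<^sub>v y) \<bullet> (Gram *\<^sub>v y)"
proof -
  let ?a = "y \<bullet> (Gram *\<^sub>v y)" and ?b = "(Gram *\<^sub>v y) \<bullet> (Gram *\<^sub>v y)"
  have "g * ?a * ?a \<le> (y \<bullet> y) * ?b * g"
    using Cauchy_Schwarz_scalar_prod[OF y mult_mat_vec_carrier[OF Gram_carrier y]] g_pos
    by (simp add: power2_eq_square)
  also have "\<dots> = (g * (y \<bullet> y)) * ?b" by simp
  also have "\<dots> \<le> ?a * ?b"
    by (rule mult_right_mono[OF gram_lower[OF y] scalar_prod_self_nonneg])
  finally have "?a * (g * ?a) \<le> ?a * ?b" by (simp add: algebra_simps)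
  moreover have "?a \<ge> 0" using gram_scalar_prod[OF G_carrier y] scalar_prod_self_nonneg by simp
  ultimately show ?thesis by (cases "?a = 0") (auto simp: scalar_prod_self_nonneg)
qed

text \<open>
  The top \<open>q\<close> eigenvalues of \<open>\<Theta>\<close> are at least \<open>g\<close>: the column space of \<open>\<Gamma>\<close>
  meets the span of the last \<open>p - q + 1\<close> eigenvectors.
\<close>

lemma dsq_top_ge: assumes i: "i < q" shows "g \<le> dsq i"
proof -
  define M where "M = mat (q - 1) q (\<lambda>(i,k). (Pt * G) $$ (i,k))"
  have M: "M \<in> carrier_mat (q - 1) q" unfolding M_def by simp
  obtain y where y: "y \<in> carrier_vec q" "y \<noteq> 0\<^sub>v q" "M *\<^sub>v y = 0\<^sub>v (q - 1)"
    using exists_kernel_vec_if_wide[OF M] q_pos by auto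
  define z where "z = G *\<^sub>v y"
  have z: "z \<in> carrier_vec p" unfolding z_def using G_carrier y by simp
  have z_pos: "z \<bullet> z > 0"
    using scalar_prod_self_pos[OF z] G_injective[OF y(1)] y(2) unfolding z_def by auto
  define h where "h = Pt *\<^sub>v z"
  have h: "h \<in> carrier_vec p" and Ph: "P *\<^sub>v h = z"
    unfolding h_def using Pt_carrier z P_Pt_mult_vec[OF z] by auto
  have hh: "h \<bullet> h = z \<bullet> z" using scalar_prod_P_mult[OF h h] Ph by simp
  have head: "h $ k = 0" if k: "k < q - 1" for k
  proof -
    have "h $ k = row (Pt * G) k \<bullet> y"
      unfolding h_def z_def using k q_le_p Pt_carrier G_carrier y
      by (simp flip: assoc_mult_mat_vec)
    also have "row (Pt * G) k = row M k"
      unfolding M_def using k q_le_p Pt_carrier G_carrier by (intro eq_vecI) auto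
    also have "row M k \<bullet> y = (M *\<^sub>v y) $ k" using k M by simp
    finally show ?thesis using y(3) k by simp
  qed
  have "g * (z \<bullet> z) \<le> (Gram *\<^sub>v y) \<bullet> (Gram *\<^sub>v y)"
    using gram_mult_vec_lower[OF y(1)] gram_scalar_prod[OF G_carrier y(1)] unfolding z_def by simp
  also have "\<dots> \<le> z \<bullet> (Theta *\<^sub>v z)"
    using scalar_prod_Theta[OF z z] S_psd[OF z] G_carrier y(1) unfolding z_def by auto
  also have "\<dots> \<le> dsq (q - 1) * (z \<bullet> z)"
    using rayleigh_Theta_le_if_head_zero[OF h _ head] q_pos q_le_p Ph hh by simp
  finally have "g \<le> dsq (q - 1)" using z_pos by simp
  also have "\<dots> \<le> dsq i" using dsq_antimono[of i "q - 1"] i q_le_p by simp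
  finally show ?thesis .
qed

text \<open>
  The remaining eigenvalues are at most \<open>\<sigma>\<close>: the span of the first \<open>q + 1\<close> eigenvectors
  contains a vector orthogonal to the columns of \<open>\<Gamma>\<close>.
\<close>

lemma dsq_bottom_le: assumes i: "q \<le> i" "i < p" shows "dsq i \<le> \<sigma>"
proof -
  define M where "M = mat q (q + 1) (\<lambda>(k,i). (Gt * P) $$ (k,i))"
  have M: "M \<in> carrier_mat q (q + 1)" unfolding M_def by simp
  obtain c where c: "c \<in> carrier_vec (q + 1)" "c \<noteq> 0\<^sub>v (q + 1)" "M *\<^sub>v c = 0\<^sub>v q"
    using exists_kernel_vec_if_wide[OF M] by auto
  define h where "h = vec p (\<lambda>i. if i < q + 1 then c $ i else 0)"
  have h: "h \<in> carrier_vec p" unfolding h_def by simp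
  have sum_h: "(\<Sum>j<p. f j * h $ j) = (\<Sum>j<q+1. f j * c $ j)" for f
    by (rule sum.mono_neutral_cong_right) (use i in \<open>auto simp: h_def\<close>)
  define z where "z = P *\<^sub>v h"
  have z: "z \<in> carrier_vec p" unfolding z_def using P_carrier h by simp
  have "h \<bullet> h = (\<Sum>j<p. h $ j * h $ j)"
    unfolding scalar_prod_def using h by (simp add: atLeast0LessThan)
  also have "\<dots> = (\<Sum>j<q+1. c $ j * c $ j)"
    unfolding sum_h by (intro sum.cong) (use i in \<open>auto simp: h_def\<close>)
  also have "\<dots> = c \<bullet> c"
    unfolding scalar_prod_def using c(1) by (simp add: atLeast0LessThan)
  finally have hh: "h \<bullet> h = c \<bullet> c" .
  have Gtz: "Gt *\<^sub>v z = 0\<^sub>v q"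
  proof (rule eq_vecI)
    fix k assume "k < dim_vec (0\<^sub>v q :: real vec)"
    hence k: "k < q" by simp
    have "(Gt *\<^sub>v z) $ k = (\<Sum>j<p. (Gt * P) $$ (k,j) * h $ j)"
      unfolding z_def using Gt_carrier P_carrier h k
      by (simp flip: assoc_mult_mat_vec add: scalar_prod_def atLeast0LessThan)
    also have "\<dots> = (M *\<^sub>v c) $ k"
      unfolding sum_h using k c(1) M unfolding M_def by (simp add: scalar_prod_def atLeast0LessThan)
    finally show "(Gt *\<^sub>v z) $ k = 0\<^sub>v q $ k" using c(3) k by simp
  qed (use Gt_carrier in auto)
  have "dsq q * (c \<bullet> c) \<le> z \<bullet> (Theta *\<^sub>v z)"
    using rayleigh_Theta_ge_if_tail_zero[OF h, of q] i hh unfolding z_def by (simp add: h_def)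
  also have "\<dots> \<le> \<sigma> * (c \<bullet> c)"
    using scalar_prod_Theta[OF z z] S_upper[OF z] Gtz scalar_prod_P_mult[OF h h] hh
    unfolding z_def by simp
  finally have "dsq q \<le> \<sigma>" using scalar_prod_self_pos[OF c(1,2)] by simp
  thus ?thesis using dsq_antimono[OF i] by simp
qed

end

section \<open>The projection onto the column space of \<open>\<Gamma>\<close>\<close>

context spiked_covariance
begin

lemma Gram_sym: "transpose_mat Gram = Gram"
  using transpose_mult[OF Gt_carrier G_carrier] by simp

lemma det_Gram_nonzero: "det Gram \<noteq> 0"
proof
  assume "det Gram = 0"
  then obtain y where y: "y \<in> carrier_vec q" "y \<noteq> 0\<^sub>v q" "Gram *\<^sub>v y = 0\<^sub>v q"
    using det_0_iff_vec_prod_zero[OF Gram_carrier] by blast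
  have "g * (y \<bullet> y) \<le> 0" using gram_lower[OF y(1)] y by simp
  thus False using g_pos scalar_prod_self_pos[OF y(1,2)] by (simp add: mult_le_0_iff)
qed

abbreviation "Gram_inv \<equiv> inv_mat Gram"

lemmas Gram_inv = inv_mat[OF Gram_carrier det_Gram_nonzero]

lemma Gram_Gram_inv_mult_vec: "y \<in> carrier_vec q \<Longrightarrow> Gram *\<^sub>v (Gram_inv *\<^sub>v y) = y"
  using Gram_inv Gram_carrier by (simp flip: assoc_mult_mat_vec)

lemma Gram_inv_Gram_mult_vec: "y \<in> carrier_vec q \<Longrightarrow> Gram_inv *\<^sub>v (Gram *\<^sub>v y) = y"
  using Gram_inv Gram_carrier by (simp flip: assoc_mult_mat_vec)

lemma Gram_inv_scalar_prod_move:
  assumes a: "a \<in> carrier_vec q" and b: "b \<in> carrier_vec q"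
  shows "(Gram_inv *\<^sub>v a) \<bullet> b = a \<bullet> (Gram_inv *\<^sub>v b)"
proof -
  have "(Gram_inv *\<^sub>v a) \<bullet> b = (Gram_inv *\<^sub>v a) \<bullet> (Gram *\<^sub>v (Gram_inv *\<^sub>v b))"
    using Gram_Gram_inv_mult_vec[OF b] by simp
  also have "\<dots> = (Gram *\<^sub>v (Gram_inv *\<^sub>v a)) \<bullet> (Gram_inv *\<^sub>v b)"
    using sym_mat_scalar_prod_move[OF Gram_carrier Gram_sym] Gram_inv a b by simp
  also have "\<dots> = a \<bullet> (Gram_inv *\<^sub>v b)" using Gram_Gram_inv_mult_vec[OF a] by simp
  finally show ?thesis .
qed

lemma vnorm2_Gram_inv_le:
  assumes y: "y \<in> carrier_vec q"
  shows "vnorm2 (Gram_inv *\<^sub>v y) \<le> vnorm2 y / g"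
proof (rule vnorm2_le_if_scalar_prod_self_le)
  define z where "z = Gram_inv *\<^sub>v y"
  have z: "z \<in> carrier_vec q" unfolding z_def using Gram_inv y by simp
  have "g * (z \<bullet> z) \<le> z \<bullet> (Gram *\<^sub>v z)" by (rule gram_lower[OF z])
  also have "\<dots> = z \<bullet> y" unfolding z_def using Gram_Gram_inv_mult_vec[OF y] by simp
  also have "\<dots> \<le> vnorm2 z * vnorm2 y" using abs_scalar_prod_le_vnorm2[OF z y] by simp
  finally show "z \<bullet> z \<le> vnorm2 y / g * vnorm2 z" using g_pos by (simp add: field_simps)
qed (use g_pos vnorm2_nonneg in simp)

lemma vnorm2_Gram_inv_Gt_le:
  assumes w: "w \<in> carrier_vec p"
  shows "vnorm2 (Gram_inv *\<^sub>v (Gt *\<^sub>v w)) \<le> vnorm2 w / sqrt g"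
proof (rule vnorm2_le_if_power2_le)
  define y where "y = Gram_inv *\<^sub>v (Gt *\<^sub>v w)"
  have y: "y \<in> carrier_vec q" unfolding y_def using Gram_inv Gt_carrier w by simp
  have Gy: "G *\<^sub>v y \<in> carrier_vec p" using G_carrier y by simp
  have "(G *\<^sub>v y) \<bullet> (G *\<^sub>v y) = (G *\<^sub>v y) \<bullet> w"
    using gram_scalar_prod[OF G_carrier y] Gram_Gram_inv_mult_vec[of "Gt *\<^sub>v w"] Gt_carrier w
      scalar_prod_transpose[OF Gt_carrier y w] G_carrier y unfolding y_def by simp
  also have "\<dots> \<le> vnorm2 w * vnorm2 (G *\<^sub>v y)"
    using abs_scalar_prod_le_vnorm2[OF Gy w] by (simp add: mult.commute)
  finally have "vnorm2 (G *\<^sub>v y) \<le> vnorm2 w"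
    by (rule vnorm2_le_if_scalar_prod_self_le) (use vnorm2_nonneg in simp)
  hence "g * (y \<bullet> y) \<le> (vnorm2 w)^2"
    using gram_lower[OF y] gram_scalar_prod[OF G_carrier y] power2_vnorm2[of "G *\<^sub>v y"]
    by (metis order_trans power_mono vnorm2_nonneg)
  thus "y \<bullet> y \<le> (vnorm2 w / sqrt g)^2" using g_pos by (simp add: power_divide field_simps)
qed (use g_pos vnorm2_nonneg in simp)

abbreviation "Proj \<equiv> proj_mat G"

lemma Proj_carrier: "Proj \<in> carrier_mat p p"
  unfolding proj_mat_def using G_carrier Gram_inv by auto

lemma Proj_mult_vec: "x \<in> carrier_vec p \<Longrightarrow> Proj *\<^sub>v x = G *\<^sub>v (Gram_inv *\<^sub>v (Gt *\<^sub>v x))"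
  unfolding proj_mat_def using G_carrier Gram_inv by (simp add: assoc_mult_mat_vec[of _ p q _ p])

lemma Proj_G: "y \<in> carrier_vec q \<Longrightarrow> Proj *\<^sub>v (G *\<^sub>v y) = G *\<^sub>v y"
  using Proj_mult_vec[of "G *\<^sub>v y"] Gram_inv_Gram_mult_vec[of y] G_carrier by (simp flip: assoc_mult_mat_vec)

lemma Gt_Proj:
  assumes x: "x \<in> carrier_vec p"
  shows "Gt *\<^sub>v (Proj *\<^sub>v x) = Gt *\<^sub>v x"
proof -
  have y: "Gram_inv *\<^sub>v (Gt *\<^sub>v x) \<in> carrier_vec q" using Gram_inv Gt_carrier x by simp
  have "Gt *\<^sub>v (Proj *\<^sub>v x) = Gram *\<^sub>v (Gram_inv *\<^sub>v (Gt *\<^sub>v x))"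
    using Proj_mult_vec[OF x] assoc_mult_mat_vec[OF Gt_carrier G_carrier y] by simp
  also have "\<dots> = Gt *\<^sub>v x" using Gram_Gram_inv_mult_vec Gt_carrier x by simp
  finally show ?thesis .
qed

lemma Proj_scalar_prod_move:
  assumes x: "x \<in> carrier_vec p" and w: "w \<in> carrier_vec p"
  shows "(Proj *\<^sub>v x) \<bullet> w = x \<bullet> (Proj *\<^sub>v w)"
proof -
  let ?a = "Gram_inv *\<^sub>v (Gt *\<^sub>v x)" and ?b = "Gram_inv *\<^sub>v (Gt *\<^sub>v w)"
  have "G *\<^sub>v ?a \<in> carrier_vec p" using G_carrier Gram_inv Gt_carrier x by simp
  hence "(Proj *\<^sub>v x) \<bullet> w = w \<bullet> (G *\<^sub>v ?a)"
    using Proj_mult_vec[OF x] comm_scalar_prod[OF _ w] by simp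
  also have "\<dots> = (Gt *\<^sub>v w) \<bullet> ?a"
    using scalar_prod_transpose[OF G_carrier w] Gram_inv Gt_carrier x by simp
  also have "\<dots> = (Gt *\<^sub>v x) \<bullet> ?b"
    using Gram_inv_scalar_prod_move[of "Gt *\<^sub>v x" "Gt *\<^sub>v w"] comm_scalar_prod[of _ q]
      Gram_inv Gt_carrier x w by (metis mult_mat_vec_carrier)
  also have "\<dots> = x \<bullet> (Proj *\<^sub>v w)"
    using scalar_prod_transpose[OF G_carrier x] Proj_mult_vec[OF w] Gram_inv Gt_carrier w by simp
  finally show ?thesis .
qed

lemma Proj_idem: "x \<in> carrier_vec p \<Longrightarrow> Proj *\<^sub>v (Proj *\<^sub>v x) = Proj *\<^sub>v x"
  using Proj_mult_vec[of x] Proj_G[of "Gram_inv *\<^sub>v (Gt *\<^sub>v x)"] Gram_inv Gt_carrier by simp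

definition Proj_perp :: "real vec \<Rightarrow> real vec" where "Proj_perp x = x - Proj *\<^sub>v x"

lemma Proj_perp_carrier: "x \<in> carrier_vec p \<Longrightarrow> Proj_perp x \<in> carrier_vec p"
  unfolding Proj_perp_def using Proj_carrier by simp

lemma Proj_Proj_perp_split: "x \<in> carrier_vec p \<Longrightarrow> x = Proj *\<^sub>v x + Proj_perp x"
  unfolding Proj_perp_def using Proj_carrier by auto

lemma Proj_perp_G: "y \<in> carrier_vec q \<Longrightarrow> Proj_perp (G *\<^sub>v y) = 0\<^sub>v p"
  unfolding Proj_perp_def using Proj_G G_carrier by auto

lemma Proj_perp_add: "x \<in> carrier_vec p \<Longrightarrow> y \<in> carrier_vec p \<Longrightarrow> Proj_perp (x + y) = Proj_perp x + Proj_perp y"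
  unfolding Proj_perp_def using Proj_carrier by (auto simp: mult_add_distrib_mat_vec[of _ p p])

lemma Proj_perp_scalar_prod_move:
  assumes x: "x \<in> carrier_vec p" and w: "w \<in> carrier_vec p"
  shows "Proj_perp x \<bullet> w = x \<bullet> Proj_perp w"
  unfolding Proj_perp_def using Proj_scalar_prod_move[OF x w] x w Proj_carrier
  by (simp add: minus_scalar_prod_distrib scalar_prod_minus_distrib)

lemma Proj_orthogonal_Proj_perp:
  assumes x: "x \<in> carrier_vec p"
  shows "(Proj *\<^sub>v x) \<bullet> Proj_perp x = 0"
  using Proj_perp_scalar_prod_move[of "Proj *\<^sub>v x" x] Proj_idem[OF x] mult_mat_vec_carrier[OF Proj_carrier x] x
  unfolding Proj_perp_def by simp

lemma Proj_Pythagoras: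
  assumes x: "x \<in> carrier_vec p"
  shows "x \<bullet> x = (Proj *\<^sub>v x) \<bullet> (Proj *\<^sub>v x) + Proj_perp x \<bullet> Proj_perp x"
proof -
  have a: "Proj *\<^sub>v x \<in> carrier_vec p" and b: "Proj_perp x \<in> carrier_vec p"
    using Proj_carrier Proj_perp_carrier x by auto
  have "x \<bullet> x = (Proj *\<^sub>v x + Proj_perp x) \<bullet> (Proj *\<^sub>v x + Proj_perp x)"
    using Proj_Proj_perp_split[OF x] by simp
  also have "\<dots> = (Proj *\<^sub>v x) \<bullet> (Proj *\<^sub>v x) + Proj_perp x \<bullet> Proj_perp x"
    using Proj_orthogonal_Proj_perp[OF x] comm_scalar_prod[OF a b] a b
    by (simp add: add_scalar_prod_distrib[of _ p] scalar_prod_add_distrib[of _ p])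
  finally show ?thesis .
qed

lemma vnorm2_Proj_perp_le: "x \<in> carrier_vec p \<Longrightarrow> vnorm2 (Proj_perp x) \<le> vnorm2 x"
  using Proj_Pythagoras[of x] scalar_prod_self_nonneg[of "Proj *\<^sub>v x"] unfolding vnorm2_def by simp

abbreviation "\<rho> \<equiv> rho1 S G"

lemma rho_nonneg: "\<rho> \<ge> 0"
  using rho1_nonneg[OF _ S_carrier G_carrier] q_pos q_le_p by simp

lemma vnorm2_Proj_S_le: "x \<in> carrier_vec p \<Longrightarrow> vnorm2 (Proj *\<^sub>v (S *\<^sub>v x)) \<le> \<rho> * vnorm2 x"
  unfolding rho1_def using vnorm2_mult_le_op_norm[of "Proj * S" p p x] Proj_carrier S_carrier by auto

lemma vnorm2_S_Proj_le: "x \<in> carrier_vec p \<Longrightarrow> vnorm2 (S *\<^sub>v (Proj *\<^sub>v x)) \<le> \<rho> * vnorm2 x"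
proof (rule vnorm2_le_by_adjoint[where F="\<lambda>w. Proj *\<^sub>v (S *\<^sub>v w)" and m=p and n=p])
  fix x w :: "real vec" assume x: "x \<in> carrier_vec p" and w: "w \<in> carrier_vec p"
  show "(S *\<^sub>v (Proj *\<^sub>v x)) \<bullet> w = x \<bullet> (Proj *\<^sub>v (S *\<^sub>v w))"
    using sym_mat_scalar_prod_move[OF S_carrier S_sym, of w "Proj *\<^sub>v x"] Proj_scalar_prod_move[OF x, of "S *\<^sub>v w"]
      Proj_carrier S_carrier x w comm_scalar_prod[of "S *\<^sub>v (Proj *\<^sub>v x)" p w]
      comm_scalar_prod[of "Proj *\<^sub>v x" p "S *\<^sub>v w"] by simp
qed (use Proj_carrier S_carrier vnorm2_Proj_S_le rho_nonneg in auto)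

lemma vnorm2_S_le: "x \<in> carrier_vec p \<Longrightarrow> vnorm2 (S *\<^sub>v x) \<le> \<sigma> * vnorm2 x"
  by (rule psd_vnorm2_mult_le[OF S_carrier S_sym S_psd S_upper \<sigma>_nonneg])

end

section \<open>The leading and trailing eigenspaces of \<open>\<Theta>\<close>\<close>

context spiked_covariance
begin

text \<open>
  With \<open>U\<close> and \<open>V\<close> the first \<open>q\<close> and the last \<open>p - q\<close> columns of \<open>P\<close>,
  \<open>U_proj\<close> and \<open>V_proj\<close> are the orthogonal projections \<open>U U\<^sup>T\<close> and \<open>V V\<^sup>T\<close>.
\<close>

definition head :: "real vec \<Rightarrow> real vec" where
  "head w = vec p (\<lambda>i. if i < q then w $ i else 0)"

definition tail :: "real vec \<Rightarrow> real vec" where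
  "tail w = vec p (\<lambda>i. if i < q then 0 else w $ i)"

definition U_proj :: "real vec \<Rightarrow> real vec" where "U_proj x = P *\<^sub>v head (Pt *\<^sub>v x)"

definition V_proj :: "real vec \<Rightarrow> real vec" where "V_proj x = P *\<^sub>v tail (Pt *\<^sub>v x)"

lemma head_carrier[simp]: "head w \<in> carrier_vec p" unfolding head_def by simp
lemma tail_carrier[simp]: "tail w \<in> carrier_vec p" unfolding tail_def by simp
lemma U_proj_carrier[simp]: "U_proj x \<in> carrier_vec p" unfolding U_proj_def using P_carrier by simp
lemma V_proj_carrier[simp]: "V_proj x \<in> carrier_vec p" unfolding V_proj_def using P_carrier by simp

lemma vnorm2_head_le: "w \<in> carrier_vec p \<Longrightarrow> vnorm2 (head w) \<le> vnorm2 w"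
  using vnorm2_le_if_entrywise_le[of "head w" p w 1] by (simp add: head_def)

lemma vnorm2_tail_le: "w \<in> carrier_vec p \<Longrightarrow> vnorm2 (tail w) \<le> vnorm2 w"
  using vnorm2_le_if_entrywise_le[of "tail w" p w 1] by (simp add: tail_def)

lemma U_proj_add_V_proj: assumes x: "x \<in> carrier_vec p" shows "U_proj x + V_proj x = x"
proof -
  have "head (Pt *\<^sub>v x) + tail (Pt *\<^sub>v x) = Pt *\<^sub>v x"
    unfolding head_def tail_def using Pt_carrier by (intro eq_vecI) auto
  thus ?thesis unfolding U_proj_def V_proj_def
    using mult_add_distrib_mat_vec[OF P_carrier head_carrier tail_carrier, symmetric] P_Pt_mult_vec[OF x]
    by simp
qed

lemma vnorm2_U_proj_le: "x \<in> carrier_vec p \<Longrightarrow> vnorm2 (U_proj x) \<le> vnorm2 x"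
  unfolding U_proj_def using vnorm2_P_mult vnorm2_head_le[of "Pt *\<^sub>v x"] vnorm2_Pt_mult Pt_carrier by simp

lemma vnorm2_V_proj_le: "x \<in> carrier_vec p \<Longrightarrow> vnorm2 (V_proj x) \<le> vnorm2 x"
  unfolding V_proj_def using vnorm2_P_mult vnorm2_tail_le[of "Pt *\<^sub>v x"] vnorm2_Pt_mult Pt_carrier by simp

lemma U_proj_scalar_prod_move:
  assumes x: "x \<in> carrier_vec p" and y: "y \<in> carrier_vec p"
  shows "U_proj x \<bullet> y = x \<bullet> U_proj y"
proof -
  have head_move: "head a \<bullet> b = a \<bullet> head b" if "a \<in> carrier_vec p" "b \<in> carrier_vec p" for a b
    using that unfolding head_def scalar_prod_def by (auto intro!: sum.cong)
  have "U_proj x \<bullet> y = head (Pt *\<^sub>v x) \<bullet> (Pt *\<^sub>v y)" unfolding U_proj_def by (rule P_adjoint) (use y in auto)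
  also have "\<dots> = (Pt *\<^sub>v x) \<bullet> head (Pt *\<^sub>v y)" by (rule head_move) (use Pt_carrier x y in auto)
  also have "\<dots> = head (Pt *\<^sub>v y) \<bullet> (Pt *\<^sub>v x)"
    by (rule comm_scalar_prod[of _ p]) (use Pt_carrier x in auto)
  also have "\<dots> = U_proj y \<bullet> x" unfolding U_proj_def by (rule P_adjoint[symmetric]) (use x in auto)
  also have "\<dots> = x \<bullet> U_proj y" by (rule comm_scalar_prod[of _ p]) (use x in auto)
  finally show ?thesis .
qed

lemma U_proj_idem: "U_proj (U_proj x) = U_proj x"
proof -
  have "head (head w) = head w" for w unfolding head_def by (intro eq_vecI) auto
  thus ?thesis unfolding U_proj_def by (simp add: Pt_P_mult_vec)
qed

lemma U_proj_add: "x \<in> carrier_vec p \<Longrightarrow> y \<in> carrier_vec p \<Longrightarrow> U_proj (x + y) = U_proj x + U_proj y"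
proof -
  assume x: "x \<in> carrier_vec p" and y: "y \<in> carrier_vec p"
  have "head (a + b) = head a + head b" if "a \<in> carrier_vec p" "b \<in> carrier_vec p" for a b
    unfolding head_def using that by (intro eq_vecI) auto
  thus ?thesis unfolding U_proj_def using Pt_carrier x y P_carrier
    by (simp add: mult_add_distrib_mat_vec[of _ p p])
qed

text \<open>\<open>U U\<^sup>T x = \<Theta> z\<close> with \<open>z = U D\<^sub>U\<^sup>-\<^sup>2 U\<^sup>T x\<close>, and the leading eigenvalues are at least \<open>g\<close>.\<close>

lemma U_proj_in_Theta_image:
  assumes x: "x \<in> carrier_vec p"
  obtains z where "z \<in> carrier_vec p" "U_proj x = Theta *\<^sub>v z" "U_proj z = z" "vnorm2 z \<le> vnorm2 x / g"
proof
  define w where "w = Pt *\<^sub>v x"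
  have w: "w \<in> carrier_vec p" unfolding w_def using Pt_carrier x by simp
  define t where "t = vec p (\<lambda>i. if i < q then w $ i / dsq i else 0)"
  have t: "t \<in> carrier_vec p" unfolding t_def by simp
  show "P *\<^sub>v t \<in> carrier_vec p" using P_carrier t by simp
  have "scale_dsq t = head w" unfolding scale_dsq_def t_def head_def
    by (intro eq_vecI) (auto dest: dsq_pos)
  thus "U_proj x = Theta *\<^sub>v (P *\<^sub>v t)" unfolding U_proj_def w_def[symmetric] using Theta_mult_P[OF t] by simp
  have "head t = t" unfolding t_def head_def by (intro eq_vecI) auto
  thus "U_proj (P *\<^sub>v t) = P *\<^sub>v t" unfolding U_proj_def using Pt_P_mult_vec[OF t] by simp
  have "vnorm2 t \<le> 1 / g * vnorm2 w"
  proof (rule vnorm2_le_if_entrywise_le[OF t w])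
    fix i assume i: "i < p"
    show "\<bar>t $ i\<bar> \<le> 1 / g * \<bar>w $ i\<bar>"
    proof (cases "i < q")
      case True
      have "\<bar>w $ i\<bar> / dsq i \<le> \<bar>w $ i\<bar> / g" using g_pos dsq_top_ge[OF True] by (simp add: frac_le)
      thus ?thesis using True i dsq_pos[OF i] unfolding t_def by (simp add: abs_div)
    qed (use i g_pos in \<open>auto simp: t_def\<close>)
  qed (use g_pos in simp)
  thus "vnorm2 (P *\<^sub>v t) \<le> vnorm2 x / g"
    using vnorm2_P_mult[OF t] vnorm2_Pt_mult[OF x] unfolding w_def by simp
qed

lemma Theta_V_proj:
  assumes x: "x \<in> carrier_vec p"
  shows "V_proj (Theta *\<^sub>v V_proj x) = Theta *\<^sub>v V_proj x"
    and "vnorm2 (Theta *\<^sub>v V_proj x) \<le> \<sigma> * vnorm2 x"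
proof -
  define b where "b = tail (Pt *\<^sub>v x)"
  have b: "b \<in> carrier_vec p" unfolding b_def by simp
  have Theta_V: "Theta *\<^sub>v V_proj x = P *\<^sub>v scale_dsq b"
    unfolding V_proj_def b_def[symmetric] by (rule Theta_mult_P[OF b])
  have "tail (scale_dsq b) = scale_dsq b" unfolding tail_def scale_dsq_def b_def by (intro eq_vecI) auto
  thus "V_proj (Theta *\<^sub>v V_proj x) = Theta *\<^sub>v V_proj x"
    unfolding Theta_V by (simp add: V_proj_def Pt_P_mult_vec)
  have "vnorm2 (scale_dsq b) \<le> \<sigma> * vnorm2 b"
  proof (rule vnorm2_le_if_entrywise_le[OF _ b \<sigma>_nonneg])
    fix i assume i: "i < p"
    show "\<bar>scale_dsq b $ i\<bar> \<le> \<sigma> * \<bar>b $ i\<bar>"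
    proof (cases "i < q")
      case False
      hence "dsq i \<le> \<sigma>" "dsq i > 0" using dsq_bottom_le dsq_pos i by auto
      thus ?thesis using i unfolding scale_dsq_def by (simp add: abs_mult mult_right_mono)
    qed (use i in \<open>simp add: scale_dsq_def b_def tail_def\<close>)
  qed simp
  also have "vnorm2 b \<le> vnorm2 x"
    unfolding b_def using vnorm2_tail_le[of "Pt *\<^sub>v x"] vnorm2_Pt_mult[OF x] Pt_carrier x by simp
  finally show "vnorm2 (Theta *\<^sub>v V_proj x) \<le> \<sigma> * vnorm2 x"
    unfolding Theta_V using vnorm2_P_mult \<sigma>_nonneg by (simp add: mult_left_mono)
qed

text \<open>Solving \<open>\<Theta> z = \<Sigma> z + \<Gamma> \<Gamma>\<^sup>T z\<close> for \<open>\<Gamma>\<^sup>T z\<close>; \<open>\<Gamma>\<^sup>T \<Sigma> z = \<Gamma>\<^sup>T \<Pi> \<Sigma> z\<close>.\<close>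

lemma Gt_mult_via_Theta:
  assumes z: "z \<in> carrier_vec p"
  shows "Gt *\<^sub>v z = Gram_inv *\<^sub>v (Gt *\<^sub>v (Theta *\<^sub>v z)) - Gram_inv *\<^sub>v (Gt *\<^sub>v (Proj *\<^sub>v (S *\<^sub>v z)))"
proof -
  have c: "Gt *\<^sub>v z \<in> carrier_vec q" "S *\<^sub>v z \<in> carrier_vec p" "Gt *\<^sub>v (S *\<^sub>v z) \<in> carrier_vec q"
    using Gt_carrier S_carrier z by auto
  have Theta_z: "Theta *\<^sub>v z \<in> carrier_vec p" using Theta_carrier z by simp
  have "Gt *\<^sub>v (Theta *\<^sub>v z) = Gt *\<^sub>v (S *\<^sub>v z) + Gram *\<^sub>v (Gt *\<^sub>v z)"
    using Theta_mult_vec[OF z] mult_add_distrib_mat_vec[OF Gt_carrier] c G_carrier by simp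
  hence "Gram *\<^sub>v (Gt *\<^sub>v z) = Gt *\<^sub>v (Theta *\<^sub>v z) - Gt *\<^sub>v (S *\<^sub>v z)"
    using c Gram_carrier by auto
  hence "Gt *\<^sub>v z = Gram_inv *\<^sub>v (Gt *\<^sub>v (Theta *\<^sub>v z) - Gt *\<^sub>v (S *\<^sub>v z))"
    using Gram_inv_Gram_mult_vec[OF c(1)] by simp
  also have "\<dots> = Gram_inv *\<^sub>v (Gt *\<^sub>v (Theta *\<^sub>v z)) - Gram_inv *\<^sub>v (Gt *\<^sub>v (S *\<^sub>v z))"
    by (rule mult_minus_distrib_mat_vec[OF Gram_inv(3)]) (use c Theta_z Gt_carrier in auto)
  finally show ?thesis using Gt_Proj[OF c(2)] by simp
qed

section \<open>Bounds on \<open>(I - \<Pi>) U U\<^sup>T\<close> and \<open>\<Gamma>\<^sup>T V V\<^sup>T\<close>\<close>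

definition Proj_perp_U_bound :: real where "Proj_perp_U_bound = (\<rho> / g) / (1 - \<sigma> / g)"

definition Gt_V_bound :: real where "Gt_V_bound = (\<rho> / sqrt g) / (1 - \<sigma> / g)"

lemma gap_ratio: "0 \<le> \<sigma> / g" "\<sigma> / g < 1"
  using gap \<sigma>_nonneg g_pos by auto

lemma Proj_perp_U_bound_nonneg: "Proj_perp_U_bound \<ge> 0"
  unfolding Proj_perp_U_bound_def using rho_nonneg g_pos gap_ratio by simp

lemma Gt_V_bound_nonneg: "Gt_V_bound \<ge> 0"
  unfolding Gt_V_bound_def using rho_nonneg g_pos gap_ratio by simp

lemma vnorm2_Proj_perp_U_proj_improve:
  assumes K: "K \<ge> 0" and IH: "\<forall>x\<in>carrier_vec p. vnorm2 (Proj_perp (U_proj x)) \<le> K * vnorm2 x"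
    and x: "x \<in> carrier_vec p"
  shows "vnorm2 (Proj_perp (U_proj x)) \<le> (\<rho> / g + \<sigma> / g * K) * vnorm2 x"
proof -
  obtain z where z: "z \<in> carrier_vec p" "U_proj x = Theta *\<^sub>v z" "U_proj z = z" "vnorm2 z \<le> vnorm2 x / g"
    using U_proj_in_Theta_image[OF x] .
  have c: "S *\<^sub>v (Proj *\<^sub>v z) \<in> carrier_vec p" "S *\<^sub>v Proj_perp z \<in> carrier_vec p"
    "G *\<^sub>v (Gt *\<^sub>v z) \<in> carrier_vec p" "Gt *\<^sub>v z \<in> carrier_vec q"
    using S_carrier Proj_carrier z Proj_perp_carrier G_carrier Gt_carrier by auto
  have "S *\<^sub>v z = S *\<^sub>v (Proj *\<^sub>v z) + S *\<^sub>v Proj_perp z"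
    using Proj_Proj_perp_split[OF z(1)] S_carrier Proj_carrier z Proj_perp_carrier
    by (metis mult_add_distrib_mat_vec mult_mat_vec_carrier)
  hence "Proj_perp (U_proj x) = Proj_perp (S *\<^sub>v (Proj *\<^sub>v z)) + Proj_perp (S *\<^sub>v Proj_perp z)"
    using z(2) Theta_mult_vec[OF z(1)] Proj_perp_add c Proj_perp_G[OF c(4)] Proj_perp_carrier by simp
  hence "vnorm2 (Proj_perp (U_proj x))
      \<le> vnorm2 (Proj_perp (S *\<^sub>v (Proj *\<^sub>v z))) + vnorm2 (Proj_perp (S *\<^sub>v Proj_perp z))"
    using vnorm2_add_le[OF Proj_perp_carrier[OF c(1)] Proj_perp_carrier[OF c(2)]] by simp
  also have "\<dots> \<le> vnorm2 (S *\<^sub>v (Proj *\<^sub>v z)) + vnorm2 (S *\<^sub>v Proj_perp z)"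
    using vnorm2_Proj_perp_le c(1,2) by (intro add_mono)
  also have "\<dots> \<le> \<rho> * vnorm2 z + \<sigma> * vnorm2 (Proj_perp (U_proj z))"
    using vnorm2_S_Proj_le[OF z(1)] vnorm2_S_le[OF Proj_perp_carrier[OF z(1)]] z(3) by (intro add_mono) auto
  also have "\<dots> \<le> \<rho> * vnorm2 z + \<sigma> * (K * vnorm2 z)"
    using IH z(1) \<sigma>_nonneg by (intro add_left_mono mult_left_mono) auto
  also have "\<dots> \<le> \<rho> * (vnorm2 x / g) + \<sigma> * (K * (vnorm2 x / g))"
    using z(4) rho_nonneg \<sigma>_nonneg K by (intro add_mono mult_left_mono) auto
  also have "\<dots> = (\<rho> / g + \<sigma> / g * K) * vnorm2 x" by (simp add: algebra_simps)
  finally show ?thesis .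
qed

lemma vnorm2_Proj_perp_U_proj_le:
  assumes x: "x \<in> carrier_vec p"
  shows "vnorm2 (Proj_perp (U_proj x)) \<le> Proj_perp_U_bound * vnorm2 x"
proof -
  have "vnorm2 (Proj_perp (U_proj y)) \<le> 1 * vnorm2 y" if "y \<in> carrier_vec p" for y
    using vnorm2_Proj_perp_le[of "U_proj y"] vnorm2_U_proj_le[OF that] by simp
  from vnorm2_bound_by_contraction[where f="\<lambda>x. vnorm2 (Proj_perp (U_proj x))", OF this
      vnorm2_Proj_perp_U_proj_improve gap_ratio _ x]
  show ?thesis unfolding Proj_perp_U_bound_def using rho_nonneg g_pos by simp
qed

lemma vnorm2_Gt_V_proj_improve:
  assumes K: "K \<ge> 0" and IH: "\<forall>x\<in>carrier_vec p. vnorm2 (Gt *\<^sub>v V_proj x) \<le> K * vnorm2 x"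
    and x: "x \<in> carrier_vec p"
  shows "vnorm2 (Gt *\<^sub>v V_proj x) \<le> (\<rho> / sqrt g + \<sigma> / g * K) * vnorm2 x"
proof -
  define z where "z = V_proj x"
  define w where "w = Theta *\<^sub>v z"
  have z: "z \<in> carrier_vec p" and w: "w \<in> carrier_vec p"
    unfolding z_def w_def using Theta_carrier by auto
  have c: "Gt *\<^sub>v w \<in> carrier_vec q" "Proj *\<^sub>v (S *\<^sub>v z) \<in> carrier_vec p"
    using Gt_carrier w Proj_carrier S_carrier z by auto
  have "vnorm2 (Gt *\<^sub>v z)
      \<le> vnorm2 (Gram_inv *\<^sub>v (Gt *\<^sub>v w)) + vnorm2 (Gram_inv *\<^sub>v (Gt *\<^sub>v (Proj *\<^sub>v (S *\<^sub>v z))))"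
    unfolding Gt_mult_via_Theta[OF z] w_def[symmetric]
    by (rule vnorm2_diff_le[of _ q]) (use Gram_inv c Gt_carrier in auto)
  also have "\<dots> \<le> vnorm2 (Gt *\<^sub>v w) / g + vnorm2 (Proj *\<^sub>v (S *\<^sub>v z)) / sqrt g"
    using vnorm2_Gram_inv_le[OF c(1)] vnorm2_Gram_inv_Gt_le[OF c(2)] by simp
  also have "\<dots> \<le> K * (\<sigma> * vnorm2 x) / g + \<rho> * vnorm2 x / sqrt g"
  proof (intro add_mono divide_right_mono)
    have "vnorm2 (Gt *\<^sub>v w) = vnorm2 (Gt *\<^sub>v V_proj w)"
      unfolding w_def z_def using Theta_V_proj(1)[OF x] by simp
    also have "\<dots> \<le> K * vnorm2 w" using IH w by blast
    also have "\<dots> \<le> K * (\<sigma> * vnorm2 x)"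
      unfolding w_def z_def using Theta_V_proj(2)[OF x] K by (rule mult_left_mono)
    finally show "vnorm2 (Gt *\<^sub>v w) \<le> K * (\<sigma> * vnorm2 x)" .
    show "vnorm2 (Proj *\<^sub>v (S *\<^sub>v z)) \<le> \<rho> * vnorm2 x"
      using vnorm2_Proj_S_le[OF z] vnorm2_V_proj_le[OF x] rho_nonneg unfolding z_def
      by (meson mult_left_mono order_trans)
  qed (use g_pos in auto)
  also have "\<dots> = (\<rho> / sqrt g + \<sigma> / g * K) * vnorm2 x" by (simp add: algebra_simps)
  finally show ?thesis unfolding z_def .
qed

lemma vnorm2_Gt_V_proj_le:
  assumes x: "x \<in> carrier_vec p"
  shows "vnorm2 (Gt *\<^sub>v V_proj x) \<le> Gt_V_bound * vnorm2 x"
proof -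
  obtain B where B: "B \<ge> 0" "\<And>y. y \<in> carrier_vec p \<Longrightarrow> vnorm2 (Gt *\<^sub>v y) \<le> B * vnorm2 y"
    using mult_mat_vec_bounded[OF Gt_carrier] by blast
  have "vnorm2 (Gt *\<^sub>v V_proj y) \<le> B * vnorm2 y" if "y \<in> carrier_vec p" for y
    using B(2)[of "V_proj y"] mult_left_mono[OF vnorm2_V_proj_le[OF that] B(1)] by simp
  from vnorm2_bound_by_contraction[where f="\<lambda>x. vnorm2 (Gt *\<^sub>v V_proj x)", OF this
      vnorm2_Gt_V_proj_improve gap_ratio _ x]
  show ?thesis unfolding Gt_V_bound_def using rho_nonneg g_pos by simp
qed

definition S_U_bound :: real where "S_U_bound = \<rho> + \<sigma> * Proj_perp_U_bound"

lemma S_U_bound_nonneg: "S_U_bound \<ge> 0"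
  unfolding S_U_bound_def using rho_nonneg \<sigma>_nonneg Proj_perp_U_bound_nonneg by simp

lemma vnorm2_S_U_proj_le:
  assumes y: "y \<in> carrier_vec p"
  shows "vnorm2 (S *\<^sub>v U_proj y) \<le> S_U_bound * vnorm2 y"
proof -
  have c: "Proj *\<^sub>v U_proj y \<in> carrier_vec p" "Proj_perp (U_proj y) \<in> carrier_vec p"
    using Proj_carrier Proj_perp_carrier by auto
  have "S *\<^sub>v U_proj y = S *\<^sub>v (Proj *\<^sub>v U_proj y) + S *\<^sub>v Proj_perp (U_proj y)"
    using Proj_Proj_perp_split[of "U_proj y"] mult_add_distrib_mat_vec[OF S_carrier c] by simp
  hence "vnorm2 (S *\<^sub>v U_proj y) \<le> vnorm2 (S *\<^sub>v (Proj *\<^sub>v U_proj y)) + vnorm2 (S *\<^sub>v Proj_perp (U_proj y))"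
    using vnorm2_add_le[of _ p] S_carrier c by simp
  also have "\<dots> \<le> \<rho> * vnorm2 (U_proj y) + \<sigma> * vnorm2 (Proj_perp (U_proj y))"
    using vnorm2_S_Proj_le[of "U_proj y"] vnorm2_S_le[OF c(2)] by (simp add: add_mono)
  also have "\<dots> \<le> \<rho> * vnorm2 y + \<sigma> * (Proj_perp_U_bound * vnorm2 y)"
    using vnorm2_U_proj_le[OF y] vnorm2_Proj_perp_U_proj_le[OF y] rho_nonneg \<sigma>_nonneg
    by (intro add_mono mult_left_mono) auto
  also have "\<dots> = S_U_bound * vnorm2 y" unfolding S_U_bound_def by (simp add: algebra_simps)
  finally show ?thesis .
qed

lemma vnorm2_U_proj_S_le:
  assumes w: "w \<in> carrier_vec p"
  shows "vnorm2 (U_proj (S *\<^sub>v w)) \<le> S_U_bound * vnorm2 w"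
proof (rule vnorm2_le_by_adjoint[where F="\<lambda>x. S *\<^sub>v U_proj x" and m=p and n=p])
  fix x w :: "real vec" assume x: "x \<in> carrier_vec p" and w: "w \<in> carrier_vec p"
  have "U_proj (S *\<^sub>v x) \<bullet> w = (S *\<^sub>v x) \<bullet> U_proj w" by (rule U_proj_scalar_prod_move) (use S_carrier x w in auto)
  also have "\<dots> = x \<bullet> (S *\<^sub>v U_proj w)" using sym_mat_scalar_prod_move[OF S_carrier S_sym x, of "U_proj w"] by simp
  finally show "U_proj (S *\<^sub>v x) \<bullet> w = x \<bullet> (S *\<^sub>v U_proj w)" .
qed (use S_carrier w vnorm2_S_U_proj_le S_U_bound_nonneg in auto)

lemma vnorm2_U_proj_Proj_perp_le:
  assumes e: "e \<in> carrier_vec p"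
  shows "vnorm2 (U_proj (Proj_perp e)) \<le> Proj_perp_U_bound * vnorm2 e"
proof (rule vnorm2_le_by_adjoint[where F="\<lambda>x. Proj_perp (U_proj x)" and m=p and n=p])
  fix x w :: "real vec" assume x: "x \<in> carrier_vec p" and w: "w \<in> carrier_vec p"
  have "U_proj (Proj_perp x) \<bullet> w = Proj_perp x \<bullet> U_proj w"
    by (rule U_proj_scalar_prod_move) (use Proj_perp_carrier x w in auto)
  also have "\<dots> = x \<bullet> Proj_perp (U_proj w)" by (rule Proj_perp_scalar_prod_move) (use x in auto)
  finally show "U_proj (Proj_perp x) \<bullet> w = x \<bullet> Proj_perp (U_proj w)" .
qed (use e vnorm2_Proj_perp_U_proj_le Proj_perp_U_bound_nonneg Proj_perp_carrier in auto)

lemma vnorm2_U_proj_le_Proj: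
  assumes e: "e \<in> carrier_vec p"
  shows "vnorm2 (U_proj e) \<le> vnorm2 (Proj *\<^sub>v e) + Proj_perp_U_bound * vnorm2 e"
proof -
  have c: "Proj *\<^sub>v e \<in> carrier_vec p" "Proj_perp e \<in> carrier_vec p"
    using Proj_carrier Proj_perp_carrier e by auto
  have "U_proj e = U_proj (Proj *\<^sub>v e) + U_proj (Proj_perp e)"
    using Proj_Proj_perp_split[OF e] U_proj_add[OF c] by simp
  hence "vnorm2 (U_proj e) \<le> vnorm2 (U_proj (Proj *\<^sub>v e)) + vnorm2 (U_proj (Proj_perp e))"
    using vnorm2_add_le[of _ p] by simp
  also have "\<dots> \<le> vnorm2 (Proj *\<^sub>v e) + Proj_perp_U_bound * vnorm2 e"
    using vnorm2_U_proj_le[OF c(1)] vnorm2_U_proj_Proj_perp_le[OF e] by (rule add_mono)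
  finally show ?thesis .
qed

section \<open>The entries of \<open>P H\<^sub>q(D\<^sup>2) P\<^sup>T - \<Sigma>\<close>\<close>

abbreviation "H \<equiv> H_trunc q (D * D)"

lemma H_carrier: "H \<in> carrier_mat p p"
  unfolding H_trunc_def using D_carrier by simp

lemma H_entry:
  assumes i: "i < p" and j: "j < p"
  shows "H $$ (i,j) = (if j = i \<and> \<not> i < q then dsq i else 0)"
proof -
  have "(D * D) $$ (i,j) = (\<Sum>l\<in>{0..<p}. D $$ (i,l) * D $$ (l,j))"
    using D_carrier i j by (simp add: scalar_prod_def)
  also have "\<dots> = D $$ (i,i) * D $$ (i,j)"
    by (subst sum.remove[of _ i]) (use D_diagonal D_carrier i j in \<open>auto simp: diagonal_mat_def intro!: sum.neutral\<close>)
  finally show ?thesis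
    unfolding H_trunc_def dsq_def using D_diagonal D_carrier i j by (auto simp: diagonal_mat_def)
qed

lemma H_mult_vec: assumes w: "w \<in> carrier_vec p" shows "H *\<^sub>v w = scale_dsq (tail w)"
proof (rule eq_vecI)
  fix i assume "i < dim_vec (scale_dsq (tail w))"
  hence i: "i < p" unfolding scale_dsq_def by simp
  have "(H *\<^sub>v w) $ i = (\<Sum>j\<in>{0..<p}. H $$ (i,j) * w $ j)"
    using H_carrier w i by (simp add: scalar_prod_def)
  also have "\<dots> = (\<Sum>j\<in>{0..<p}. (if j = i \<and> \<not> i < q then dsq i * w $ i else 0))"
    using i by (intro sum.cong) (auto simp: H_entry)
  also have "\<dots> = scale_dsq (tail w) $ i" using i unfolding scale_dsq_def tail_def by (simp add: sum.delta')
  finally show "(H *\<^sub>v w) $ i = scale_dsq (tail w) $ i" .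
qed (use H_carrier in \<open>auto simp: scale_dsq_def\<close>)

lemma scalar_prod_P_H_Pt:
  assumes x: "x \<in> carrier_vec p" and y: "y \<in> carrier_vec p"
  shows "x \<bullet> ((P * H * Pt) *\<^sub>v y) = V_proj x \<bullet> (Theta *\<^sub>v V_proj y)"
proof -
  have "(P * H * Pt) *\<^sub>v y = P *\<^sub>v scale_dsq (tail (Pt *\<^sub>v y))"
    using P_carrier H_carrier Pt_carrier y H_mult_vec[of "Pt *\<^sub>v y"]
    by (simp add: assoc_mult_mat_vec[of _ p p _ p])
  hence "x \<bullet> ((P * H * Pt) *\<^sub>v y) = (Pt *\<^sub>v x) \<bullet> scale_dsq (tail (Pt *\<^sub>v y))"
    using scalar_prod_transpose[OF P_carrier x] by simp
  also have "\<dots> = (\<Sum>i<p. dsq i * tail (Pt *\<^sub>v x) $ i * tail (Pt *\<^sub>v y) $ i)"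
    using Pt_carrier x unfolding scalar_prod_def scale_dsq_def tail_def
    by (auto simp: atLeast0LessThan intro!: sum.cong)
  also have "\<dots> = V_proj x \<bullet> (Theta *\<^sub>v V_proj y)"
    unfolding V_proj_def by (rule scalar_prod_P_Theta_P[symmetric]) auto
  finally show ?thesis .
qed

text \<open>
  Writing \<open>x = U U\<^sup>T x + V V\<^sup>T x\<close>, the quadratic form of the error splits into the part of
  \<open>\<Gamma>\<Gamma>\<^sup>T\<close> seen by \<open>V\<close> and the parts of \<open>\<Sigma>\<close> seen by \<open>U\<close>.
\<close>

lemma scalar_prod_error:
  assumes x: "x \<in> carrier_vec p" and y: "y \<in> carrier_vec p"
  shows "x \<bullet> ((P * H * Pt - S) *\<^sub>v y) = (Gt *\<^sub>v V_proj x) \<bullet> (Gt *\<^sub>v V_proj y)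
    - U_proj x \<bullet> (S *\<^sub>v U_proj y) - U_proj x \<bullet> (S *\<^sub>v V_proj y) - U_proj y \<bullet> (S *\<^sub>v V_proj x)"
proof -
  have PHPt: "P * H * Pt \<in> carrier_mat p p" using P_carrier H_carrier by simp
  have "x \<bullet> (S *\<^sub>v y) = (U_proj x + V_proj x) \<bullet> (S *\<^sub>v (U_proj y + V_proj y))"
    using U_proj_add_V_proj x y by simp
  also have "\<dots> = U_proj x \<bullet> (S *\<^sub>v U_proj y) + U_proj x \<bullet> (S *\<^sub>v V_proj y)
      + V_proj x \<bullet> (S *\<^sub>v U_proj y) + V_proj x \<bullet> (S *\<^sub>v V_proj y)"
    using S_carrier by (simp add: mult_add_distrib_mat_vec[OF S_carrier]
        scalar_prod_add_distrib[of _ p] add_scalar_prod_distrib[of _ p])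
  finally have "x \<bullet> ((P * H * Pt - S) *\<^sub>v y) = V_proj x \<bullet> (Theta *\<^sub>v V_proj y)
      - (U_proj x \<bullet> (S *\<^sub>v U_proj y) + U_proj x \<bullet> (S *\<^sub>v V_proj y)
      + V_proj x \<bullet> (S *\<^sub>v U_proj y) + V_proj x \<bullet> (S *\<^sub>v V_proj y))"
    using scalar_prod_P_H_Pt[OF x y] PHPt S_carrier x y
    by (simp add: minus_mult_distrib_mat_vec[OF PHPt S_carrier] scalar_prod_minus_distrib[of _ p])
  moreover have "V_proj x \<bullet> (S *\<^sub>v U_proj y) = U_proj y \<bullet> (S *\<^sub>v V_proj x)"
    by (rule sym_mat_scalar_prod_comm[OF S_carrier S_sym]) auto
  ultimately show ?thesis using scalar_prod_Theta[of "V_proj x" "V_proj y"] by simp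
qed

lemma abs_scalar_prod_U_proj_S_le:
  assumes e: "e \<in> carrier_vec p" and w: "w \<in> carrier_vec p"
  shows "\<bar>U_proj e \<bullet> (S *\<^sub>v w)\<bar> \<le> vnorm2 (U_proj e) * (S_U_bound * vnorm2 w)"
proof -
  have "U_proj e \<bullet> (S *\<^sub>v w) = U_proj (U_proj e) \<bullet> (S *\<^sub>v w)" using U_proj_idem by simp
  also have "\<dots> = U_proj e \<bullet> U_proj (S *\<^sub>v w)" by (rule U_proj_scalar_prod_move) (use S_carrier w in auto)
  finally have "\<bar>U_proj e \<bullet> (S *\<^sub>v w)\<bar> \<le> vnorm2 (U_proj e) * vnorm2 (U_proj (S *\<^sub>v w))"
    using abs_scalar_prod_le_vnorm2[of "U_proj e" p] by simp
  also have "\<dots> \<le> vnorm2 (U_proj e) * (S_U_bound * vnorm2 w)"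
    using vnorm2_U_proj_S_le[OF w] vnorm2_nonneg by (rule mult_left_mono)
  finally show ?thesis .
qed

lemma abs_error_entry_le:
  assumes j: "j < p" and k: "k < p"
  shows "\<bar>(P * H * Pt - S) $$ (j,k)\<bar>
    \<le> Gt_V_bound^2 + 3 * S_U_bound * (rho2 G + Proj_perp_U_bound)"
proof -
  define ej :: "real vec" where "ej = unit_vec p j"
  define ek :: "real vec" where "ek = unit_vec p k"
  have unit: "e \<in> carrier_vec p" "vnorm2 e = 1" if "e \<in> {ej, ek}" for e
    using that j k vnorm2_unit_vec unfolding ej_def ek_def by auto
  have "(P * H * Pt - S) $$ (j,k) = ej \<bullet> ((P * H * Pt - S) *\<^sub>v ek)"
    unfolding ej_def ek_def using P_carrier H_carrier S_carrier j k
    by (intro mat_entry_eq_scalar_prod_unit_vec) auto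
  also have "\<dots> = (Gt *\<^sub>v V_proj ej) \<bullet> (Gt *\<^sub>v V_proj ek)
    - U_proj ej \<bullet> (S *\<^sub>v U_proj ek) - U_proj ej \<bullet> (S *\<^sub>v V_proj ek) - U_proj ek \<bullet> (S *\<^sub>v V_proj ej)"
    using scalar_prod_error unit by simp
  finally have error: "(P * H * Pt - S) $$ (j,k) = \<dots>" .
  have U_le: "vnorm2 (U_proj e) \<le> rho2 G + Proj_perp_U_bound" if e: "e \<in> {ej, ek}" for e
  proof -
    have "vnorm2 (Proj *\<^sub>v e) \<le> rho2 G"
      using e vnorm2_proj_mat_unit_vec_le_rho2[of _ G] G_carrier j k unfolding ej_def ek_def by auto
    thus ?thesis using vnorm2_U_proj_le_Proj[OF unit(1)[OF e]] unit(2)[OF e] by simp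
  qed
  have Gt_V_le: "vnorm2 (Gt *\<^sub>v V_proj e) \<le> Gt_V_bound" if "e \<in> {ej, ek}" for e
    using vnorm2_Gt_V_proj_le[OF unit(1)[OF that]] unit(2)[OF that] by simp
  have term_le: "\<bar>U_proj e \<bullet> (S *\<^sub>v w)\<bar> \<le> S_U_bound * (rho2 G + Proj_perp_U_bound)"
    if e: "e \<in> {ej, ek}" and w: "w \<in> carrier_vec p" "vnorm2 w \<le> 1" for e w
  proof -
    have "\<bar>U_proj e \<bullet> (S *\<^sub>v w)\<bar> \<le> vnorm2 (U_proj e) * (S_U_bound * vnorm2 w)"
      by (rule abs_scalar_prod_U_proj_S_le[OF unit(1)[OF e] w(1)])
    also have "\<dots> \<le> (rho2 G + Proj_perp_U_bound) * (S_U_bound * 1)"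
      using U_le[OF e] w(2) S_U_bound_nonneg vnorm2_nonneg rho2_nonneg Proj_perp_U_bound_nonneg
      by (intro mult_mono mult_left_mono) auto
    finally show ?thesis by (simp add: mult.commute)
  qed
  have "\<bar>(Gt *\<^sub>v V_proj ej) \<bullet> (Gt *\<^sub>v V_proj ek)\<bar> \<le> vnorm2 (Gt *\<^sub>v V_proj ej) * vnorm2 (Gt *\<^sub>v V_proj ek)"
    by (rule abs_scalar_prod_le_vnorm2[of _ q]) (use Gt_carrier in auto)
  also have "\<dots> \<le> Gt_V_bound^2"
    using Gt_V_le[of ej] Gt_V_le[of ek] vnorm2_nonneg Gt_V_bound_nonneg
    by (simp add: power2_eq_square mult_mono)
  moreover have "vnorm2 (U_proj ek) \<le> 1" "vnorm2 (V_proj ek) \<le> 1" "vnorm2 (V_proj ej) \<le> 1"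
    using vnorm2_U_proj_le vnorm2_V_proj_le unit by (metis insertI1 insertI2 singletonI)+
  ultimately show ?thesis
    unfolding error using term_le[of ej "U_proj ek"] term_le[of ej "V_proj ek"] term_le[of ek "V_proj ej"]
    by simp
qed

end

definition bound_constant :: "real \<Rightarrow> real" where
  "bound_constant c = (let k = c / (c - 1) in 3 * (1 + k) + k^2 + 3 * k * (1 + k))"

lemma bound_constant_nonneg: "c > 1 \<Longrightarrow> bound_constant c \<ge> 0"
  unfolding bound_constant_def Let_def by simp

context spiked_covariance
begin

text \<open>\<open>1 / (1 - \<sigma> / g) \<le> k\<close> for \<open>k = c / (c - 1)\<close> once \<open>c \<sigma> < g\<close>.\<close>

lemma operator_bounds_le:
  assumes c: "c > 1" and gap_c: "c * \<sigma> < g"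
  defines "k \<equiv> c / (c - 1)"
  shows "Proj_perp_U_bound \<le> k * \<rho> / g" and "Gt_V_bound^2 \<le> k^2 * \<rho>^2 / g"
    and "S_U_bound \<le> (1 + k) * \<rho>"
proof -
  have "1 - 1/c \<le> 1 - \<sigma>/g" using gap_c g_pos c by (simp add: field_simps)
  hence ratio: "1 / (1 - \<sigma>/g) \<le> k"
    unfolding k_def using gap_ratio c by (simp add: field_simps divide_le_eq)
  show U: "Proj_perp_U_bound \<le> k * \<rho> / g"
    using mult_left_mono[OF ratio, of "\<rho> / g"] rho_nonneg g_pos unfolding Proj_perp_U_bound_def by (simp add: ac_simps)
  have "Gt_V_bound \<le> k * \<rho> / sqrt g"
    using mult_left_mono[OF ratio, of "\<rho> / sqrt g"] rho_nonneg g_pos unfolding Gt_V_bound_def by (simp add: ac_simps)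
  hence "Gt_V_bound^2 \<le> (k * \<rho> / sqrt g)^2" using Gt_V_bound_nonneg by (rule power_mono)
  thus "Gt_V_bound^2 \<le> k^2 * \<rho>^2 / g" using g_pos by (simp add: power_divide power_mult_distrib)
  have "\<sigma> * Proj_perp_U_bound \<le> (\<sigma> / g) * (k * \<rho>)"
    using mult_left_mono[OF U \<sigma>_nonneg] by simp
  also have "\<dots> \<le> k * \<rho>"
    using gap_ratio rho_nonneg c unfolding k_def by (intro mult_left_le_one_le) auto
  finally show "S_U_bound \<le> (1 + k) * \<rho>" unfolding S_U_bound_def by (simp add: algebra_simps)
qed

lemma max_abs_error_le:
  assumes c: "c > 1" and gap_c: "c * \<sigma> < g" and gu: "g \<le> gu"
  shows "max_abs (P * H * Pt - S) \<le> bound_constant c * (\<rho> * rho2 G + gu * \<rho>^2 / g^2)"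
proof -
  define k where "k = c / (c - 1)"
  have k: "k \<ge> 1" unfolding k_def using c by simp
  note bounds = operator_bounds_le[OF c gap_c, folded k_def]
  have "\<rho>^2 / g = g * \<rho>^2 / g^2" using g_pos by (simp add: power2_eq_square)
  also have "\<dots> \<le> gu * \<rho>^2 / g^2" using gu g_pos by (intro divide_right_mono mult_right_mono) auto
  finally have gu_le: "\<rho>^2 / g \<le> gu * \<rho>^2 / g^2" .
  have "max_abs (P * H * Pt - S) \<le> Gt_V_bound^2 + 3 * S_U_bound * (rho2 G + Proj_perp_U_bound)"
    using abs_error_entry_le P_carrier S_carrier Gt_V_bound_nonneg S_U_bound_nonneg rho2_nonneg
      Proj_perp_U_bound_nonneg by (intro max_abs_le) auto
  also have "\<dots> \<le> k^2 * (\<rho>^2 / g) + 3 * ((1 + k) * \<rho>) * (rho2 G + k * \<rho> / g)"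
    using bounds S_U_bound_nonneg rho2_nonneg Proj_perp_U_bound_nonneg k
    by (intro add_mono mult_mono mult_left_mono add_left_mono) auto
  also have "\<dots> = 3 * (1 + k) * (\<rho> * rho2 G) + (k^2 + 3 * k * (1 + k)) * (\<rho>^2 / g)"
    by (simp add: algebra_simps power2_eq_square)
  also have "\<dots> \<le> bound_constant c * (\<rho> * rho2 G) + bound_constant c * (gu * \<rho>^2 / g^2)"
    using k rho_nonneg rho2_nonneg[of G] g_pos gu_le
    unfolding bound_constant_def Let_def k_def[symmetric]
    by (intro add_mono mult_mono) (auto intro: mult_nonneg_nonneg)
  finally show ?thesis by (simp add: algebra_simps)
qed

end

section \<open>Degenerate dimensions and the assembled bound\<close>

lemma full_col_rank_no_rows:
  assumes G: "G \<in> carrier_mat 0 q" and rank: "full_col_rank G"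
  shows "q = 0"
proof (rule ccontr)
  assume "q \<noteq> 0"
  hence "unit_vec q 0 \<in> carrier_vec q" "unit_vec q 0 \<noteq> (0\<^sub>v q :: real vec)"
    by (auto simp: vec_eq_iff)
  moreover have "G *\<^sub>v unit_vec q 0 = 0\<^sub>v 0" using G by (intro eq_vecI) auto
  ultimately show False using rank G unfolding full_col_rank_def by auto
qed

text \<open>This is the only use of the hypothesis \<open>\<sigma>\<^sub>l \<ge> s0 > 0\<close>.\<close>

lemma no_rows_contradiction:
  assumes "c > 1" "s0 > 0" and S: "S \<in> carrier_mat 0 0" and G: "G \<in> carrier_mat 0 q"
    and "full_col_rank G" and "lambda_min S \<ge> s0"
    and "lambda_min (transpose_mat G * G) > c * lambda_max S"
  shows False
proof -
  have "transpose_mat G * G \<in> carrier_mat 0 0" using G full_col_rank_no_rows[OF G \<open>full_col_rank G\<close>] by simp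
  thus False using assms lambda_min_max_empty[OF S S] lambda_min_max_empty[of "transpose_mat G * G" S]
    by (smt (verit) mult_le_cancel_right1)
qed

lemma error_eq_0_if_no_columns:
  assumes S: "S \<in> carrier_mat p p" and G: "G \<in> carrier_mat p 0" and D: "D \<in> carrier_mat p p"
    and decomposition: "S + G * transpose_mat G = P * (D * D) * transpose_mat P"
  shows "P * H_trunc 0 (D * D) * transpose_mat P - S = 0\<^sub>m p p"
proof -
  have "H_trunc 0 (D * D) = D * D" unfolding H_trunc_def using D by (intro eq_matI) auto
  hence "P * H_trunc 0 (D * D) * transpose_mat P = S + G * transpose_mat G"
    using decomposition by simp
  moreover have "G * transpose_mat G = 0\<^sub>m p p" using G by (intro eq_matI) (auto simp: scalar_prod_def)
  ultimately show ?thesis using S by (intro eq_matI) auto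
qed

lemma spiked_covariance_eigenvalue_bounds:
  assumes c: "c > 1" and p: "p > 0" and q: "q > 0"
    and S: "sym_pos_def_mat S p" and G: "G \<in> carrier_mat p q"
    and P: "P \<in> carrier_mat p p" "transpose_mat P * P = 1\<^sub>m p"
    and D: "D \<in> carrier_mat p p" "diagonal_mat D"
      "\<forall>i j. i \<le> j \<and> j < p \<longrightarrow> D $$ (j,j) \<le> D $$ (i,i)" "\<forall>i<p. D $$ (i,i) > 0"
    and decomposition: "S + G * transpose_mat G = P * (D * D) * transpose_mat P"
    and gap: "lambda_min (transpose_mat G * G) > c * lambda_max S"
  shows "spiked_covariance p q S G P D (lambda_max S) (lambda_min (transpose_mat G * G))"
proof -
  have S_carrier: "S \<in> carrier_mat p p" and S_sym: "transpose_mat S = S"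
    using S unfolding sym_pos_def_mat_def by auto
  note S_psd = sym_pos_def_mat_psd[OF S]
  have Gram: "transpose_mat G * G \<in> carrier_mat q q" "transpose_mat (transpose_mat G * G) = transpose_mat G * G"
    using G transpose_mult[of "transpose_mat G" q p G q] by auto
  have \<sigma>: "lambda_max S \<ge> 0" by (rule lambda_max_nonneg_if_psd[OF S_carrier S_sym p S_psd])
  moreover have "lambda_max S \<le> c * lambda_max S" using \<sigma> c by (simp add: mult_le_cancel_right1)
  ultimately have "lambda_max S < lambda_min (transpose_mat G * G)" using gap by linarith
  with q S_carrier S_sym S_psd rayleigh_le_lambda_max[OF S_carrier S_sym p] \<sigma>
    lambda_min_le_rayleigh[OF Gram q] G P D decomposition
  show ?thesis by unfold_locales auto
qed

lemma max_abs_error_le_bound_constant: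
  fixes c s0 :: real
  assumes c: "c > 1" and s0: "s0 > 0"
    and S: "sym_pos_def_mat S p" and G: "G \<in> carrier_mat p q" and rank: "full_col_rank G"
    and P: "P \<in> carrier_mat p p" "transpose_mat P * P = 1\<^sub>m p"
    and D: "D \<in> carrier_mat p p" "diagonal_mat D"
      "\<forall>i j. i \<le> j \<and> j < p \<longrightarrow> D $$ (j,j) \<le> D $$ (i,i)" "\<forall>i<p. D $$ (i,i) > 0"
    and decomposition: "S + G * transpose_mat G = P * (D * D) * transpose_mat P"
    and lambda_S: "lambda_min S \<ge> s0"
    and eigen_gap: "lambda_min (transpose_mat G * G) > c * lambda_max S"
  shows "max_abs (P * H_trunc q (D * D) * transpose_mat P - S)
    \<le> bound_constant c * (rho1 S G * rho2 G
      + lambda_max (transpose_mat G * G) * (rho1 S G)\<^sup>2 / (lambda_min (transpose_mat G * G))\<^sup>2)"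
proof -
  have S_carrier: "S \<in> carrier_mat p p" and S_sym: "transpose_mat S = S"
    using S unfolding sym_pos_def_mat_def by auto
  consider "p = 0" | "p > 0" "q = 0" | "p > 0" "q > 0" by auto
  then show ?thesis
  proof cases
    case 1
    with S_carrier G have "S \<in> carrier_mat 0 0" "G \<in> carrier_mat 0 q" by auto
    thus ?thesis using no_rows_contradiction[OF c s0 _ _ rank lambda_S eigen_gap] by blast
  next
    case 2
    let ?g = "lambda_min (transpose_mat G * G)"
    have "transpose_mat G * G \<in> carrier_mat 0 0" using G 2 by simp
    hence gu: "lambda_max (transpose_mat G * G) = ?g" using lambda_min_max_empty by metis
    have "lambda_max S \<ge> 0"
      by (rule lambda_max_nonneg_if_psd[OF S_carrier S_sym 2(1) sym_pos_def_mat_psd[OF S]])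
    hence "?g \<ge> 0" using eigen_gap c by (smt (verit) mult_nonneg_nonneg)
    hence "0 \<le> bound_constant c * (rho1 S G * rho2 G + ?g * (rho1 S G)\<^sup>2 / ?g\<^sup>2)"
      using bound_constant_nonneg[OF c] rho1_nonneg[OF 2(1) S_carrier G] rho2_nonneg[of G] by simp
    moreover have "P * H_trunc q (D * D) * transpose_mat P - S = 0\<^sub>m p p"
      using error_eq_0_if_no_columns[OF S_carrier _ D(1) decomposition] G 2 by simp
    moreover have "max_abs (0\<^sub>m p p) \<le> 0" by (rule max_abs_le) auto
    ultimately show ?thesis unfolding gu by simp
  next
    case 3
    interpret spiked_covariance p q S G P D "lambda_max S" "lambda_min (transpose_mat G * G)"
      using spiked_covariance_eigenvalue_bounds[OF c 3 S G P D decomposition eigen_gap] .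
    show ?thesis
      by (rule max_abs_error_le[OF c eigen_gap lambda_min_le_lambda_max[OF Gram_carrier Gram_sym q_pos]])
  qed
qed

theorem proposition1:
  fixes c s0 :: real
  assumes "c > 1" and "s0 > 0"
  shows "\<exists>C::real. \<forall>(p::nat) (q::nat) S G P D.
     sym_pos_def_mat S p \<and> G \<in> carrier_mat p q \<and> full_col_rank G \<and>
     P \<in> carrier_mat p p \<and> transpose_mat P * P = 1\<^sub>m p \<and>
     D \<in> carrier_mat p p \<and> diagonal_mat D \<and>
     (\<forall>i j. i \<le> j \<and> j < p \<longrightarrow> D $$ (j,j) \<le> D $$ (i,i)) \<and>
     (\<forall>i<p. D $$ (i,i) > 0) \<and>
     S + G * transpose_mat G = P * (D * D) * transpose_mat P \<and>
     lambda_min S \<ge> s0 \<and>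
     lambda_min (transpose_mat G * G) > c * lambda_max S
     \<longrightarrow> max_abs (P * H_trunc q (D * D) * transpose_mat P - S)
         \<le> C * (rho1 S G * rho2 G
               + lambda_max (transpose_mat G * G) * (rho1 S G)\<^sup>2
                 / (lambda_min (transpose_mat G * G))\<^sup>2)"
  by (intro exI[of _ "bound_constant c"] allI impI, elim conjE)
    (rule max_abs_error_le_bound_constant[OF assms])

end
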